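(* Let $b\in\mathbb R^d$, $\mu,\nu\in\mathcal P_2^b(\mathbb R^d)$, $\overline u$ an optimal potential for $Z_2(\mu,\nu)$, $\overline\zeta(x,y)=\frac{x+y}2+\frac{\nabla\overline u(x)-\nabla\overline u(y)}2$, $\gamma\in\overline\Gamma(\mu,\nu)$, and $\gamma_i=(\pi_i,\overline\zeta)\#\gamma$ for $i=1,2$. With disintegrations $\gamma=\mu(dx)\otimes\gamma_x(dy)=\gamma_y(dx)\otimes\nu(dy)$, $\gamma_1=\mu(dx)\otimes\gamma^1_x(dz)$, $\gamma_2=\nu(dy)\otimes\gamma^2_y(dz)$, one has $$Z_2(\mu,\nu)=\int\tfrac12W_2^2(\gamma_x,\gamma^1_x)\,\mu(dx)+\int\tfrac12W_2^2(\gamma_y,\gamma^2_y)\,\nu(dy).$$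
   Context: $\mathcal P_2^b(\mathbb R^d)$: probability measures with finite second moment and barycentre $b$. $W_2$: quadratic Wasserstein distance. $X,Y$: supports of $\mu,\nu$. $\Gamma(\mu,\nu)$: probabilities on $X\times Y$ with marginals $\mu,\nu$. $Q(\mu,\nu)$: finite $\mathbb R^d$-valued Borel measures $q$ on $X\times Y$ with $\int\langle\Phi(x),q(dxdy)\rangle=\int\langle\Phi(x),x\rangle\mu(dx)$, $\int\langle\Psi(y),q(dxdy)\rangle=\int\langle\Psi(y),y\rangle\nu(dy)$ for all bounded Borel $\Phi,\Psi$. $Z_2(\mu,\nu)=\max\{\int u\,d(\mu-\nu):u\in C^{1,1}(\mathbb R^d),\mathrm{lip}(\nabla u)\le1\}$; maximizers are optimal potentials. $\overline\Gamma(\mu,\nu)=\{\gamma\in\Gamma(\mu,\nu):\overline\zeta\gamma\in Q(\mu,\nu)\}$. $\pi_1(x,y)=x$, $\pi_2(x,y)=y$; $\#$ is push-forward. *)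

theory Defs
  imports "HOL-Probability.Probability"
begin

text \<open>R^d is modelled by an arbitrary Euclidean space 'a (dimension DIM('a)).
  Measures on 'a and on 'a \<times> 'a are Borel measures.\<close>

definition P2b :: "'a::euclidean_space \<Rightarrow> 'a measure set" where
  "P2b b = {M. prob_space M \<and> sets M = sets borel \<and>
              integrable M (\<lambda>x. norm x ^ 2) \<and> (\<integral>x. x \<partial>M) = b}"

definition msupp :: "'a::topological_space measure \<Rightarrow> 'a set" where
  "msupp M = {x. \<forall>U. open U \<and> x \<in> U \<longrightarrow> emeasure M U > 0}"

definition couplings :: "'a::euclidean_space measure \<Rightarrow> 'b::euclidean_space measure
    \<Rightarrow> ('a \<times> 'b) measure set" where
  "couplings \<mu> \<nu> = {\<gamma>. prob_space \<gamma> \<and> sets \<gamma> = sets borel \<and>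
                       distr \<gamma> borel fst = \<mu> \<and> distr \<gamma> borel snd = \<nu>}"

definition W2sq :: "'a::euclidean_space measure \<Rightarrow> 'a measure \<Rightarrow> ennreal" where
  "W2sq \<mu> \<nu> = (INF \<gamma>\<in>couplings \<mu> \<nu>. \<integral>\<^sup>+p. ennreal (norm (fst p - snd p) ^ 2) \<partial>\<gamma>)"

definition Gamma :: "'a::euclidean_space measure \<Rightarrow> 'a measure \<Rightarrow> ('a \<times> 'a) measure set" where
  "Gamma \<mu> \<nu> = {\<gamma>\<in>couplings \<mu> \<nu>. AE p in \<gamma>. p \<in> msupp \<mu> \<times> msupp \<nu>}"

definition grad_lip1 :: "('a::euclidean_space \<Rightarrow> real) \<Rightarrow> ('a \<Rightarrow> 'a) \<Rightarrow> bool" where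
  "grad_lip1 u g \<longleftrightarrow> (\<forall>x. (u has_derivative (\<lambda>h. g x \<bullet> h)) (at x)) \<and>
                      (\<forall>x y. norm (g x - g y) \<le> norm (x - y))"

text \<open>Z_2(\<mu>,\<nu>) = sup of \<integral> u d(\<mu>-\<nu>) over such u (the paper shows it is a max).\<close>
definition Z2 :: "'a::euclidean_space measure \<Rightarrow> 'a measure \<Rightarrow> real" where
  "Z2 \<mu> \<nu> = Sup {(\<integral>x. u x \<partial>\<mu>) - (\<integral>x. u x \<partial>\<nu>) | u. \<exists>g. grad_lip1 u g}"

definition optimal_potential :: "'a::euclidean_space measure \<Rightarrow> 'a measure
    \<Rightarrow> ('a \<Rightarrow> real) \<Rightarrow> ('a \<Rightarrow> 'a) \<Rightarrow> bool" where
  "optimal_potential \<mu> \<nu> u g \<longleftrightarrow> grad_lip1 u g \<and>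
      (\<integral>x. u x \<partial>\<mu>) - (\<integral>x. u x \<partial>\<nu>) = Z2 \<mu> \<nu>"

text \<open>The vector measure f\<gamma> (density f w.r.t. \<gamma>) belongs to Q(\<mu>,\<nu>): it is a finite
  R^d-valued Borel measure on X \<times> Y (f is \<gamma>-integrable, \<gamma> lives on X \<times> Y) and
  its moment conditions hold for all bounded Borel \<Phi>, \<Psi>.\<close>
definition density_in_Q :: "'a::euclidean_space measure \<Rightarrow> 'a measure \<Rightarrow> ('a \<times> 'a) measure
    \<Rightarrow> ('a \<times> 'a \<Rightarrow> 'a) \<Rightarrow> bool" where
  "density_in_Q \<mu> \<nu> \<gamma> f \<longleftrightarrow> integrable \<gamma> f \<and>
     (AE p in \<gamma>. p \<in> msupp \<mu> \<times> msupp \<nu>) \<and>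
     (\<forall>\<Phi>::'a \<Rightarrow> 'a. \<Phi> \<in> borel_measurable borel \<and> bounded (range \<Phi>) \<longrightarrow>
        (\<integral>p. \<Phi> (fst p) \<bullet> f p \<partial>\<gamma>) = (\<integral>x. \<Phi> x \<bullet> x \<partial>\<mu>)) \<and>
     (\<forall>\<Psi>::'a \<Rightarrow> 'a. \<Psi> \<in> borel_measurable borel \<and> bounded (range \<Psi>) \<longrightarrow>
        (\<integral>p. \<Psi> (snd p) \<bullet> f p \<partial>\<gamma>) = (\<integral>y. \<Psi> y \<bullet> y \<partial>\<nu>))"

definition zeta :: "('a::euclidean_space \<Rightarrow> 'a) \<Rightarrow> 'a \<times> 'a \<Rightarrow> 'a" where
  "zeta g p = (1/2) *\<^sub>R (fst p + snd p) + (1/2) *\<^sub>R (g (fst p) - g (snd p))"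

definition Gamma_bar :: "'a::euclidean_space measure \<Rightarrow> 'a measure \<Rightarrow> ('a \<Rightarrow> 'a)
    \<Rightarrow> ('a \<times> 'a) measure set" where
  "Gamma_bar \<mu> \<nu> g = {\<gamma>\<in>Gamma \<mu> \<nu>. density_in_Q \<mu> \<nu> \<gamma> (zeta g)}"

definition disint_fst :: "'a::euclidean_space measure \<Rightarrow> ('a \<Rightarrow> 'b::euclidean_space measure)
    \<Rightarrow> ('a \<times> 'b) measure \<Rightarrow> bool" where
  "disint_fst M K \<gamma> \<longleftrightarrow> K \<in> measurable M (prob_algebra borel) \<and>
     (\<forall>A\<in>sets borel. emeasure \<gamma> A = (\<integral>\<^sup>+x. emeasure (K x) (Pair x -` A) \<partial>M))"

definition disint_snd :: "'b::euclidean_space measure \<Rightarrow> ('b \<Rightarrow> 'a::euclidean_space measure)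
    \<Rightarrow> ('a \<times> 'b) measure \<Rightarrow> bool" where
  "disint_snd N K \<gamma> \<longleftrightarrow> K \<in> measurable N (prob_algebra borel) \<and>
     (\<forall>A\<in>sets borel. emeasure \<gamma> A = (\<integral>\<^sup>+y. emeasure (K y) ((\<lambda>x. (x, y)) -` A) \<partial>N))"

end

(*
  For fixed x, the map y |-> zeta(x,y) = (x + grad u(x))/2 + (y - grad u(y))/2 is a translate of
  the gradient of phi(y) = |y|^2/4 - u(y)/2, which is convex because grad u is 1-Lipschitz.
  Gradients of convex functions are optimal transport maps (weak Kantorovich duality with the
  convex conjugate of phi).  Since gamma_1 = (pi_1, zeta)#gamma, the kernel gamma^1_x is the
  push-forward of gamma_x under zeta(x,.) for mu-a.e. x, hence
  W_2^2(gamma_x, gamma^1_x) = int |y - zeta(x,y)|^2 gamma_x(dy), and symmetrically on the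
  second marginal.  Integrating, the right-hand side becomes int (|y - zeta|^2 + |x - zeta|^2)/2
  dgamma.  Expanding the squares, this is (int x.grad u dmu - int y.grad u dnu)/2 plus integrals of
  Phi(x).(zeta - x) and Psi(y).(zeta - y), which vanish because zeta gamma lies in Q(mu,nu)
  (for linearly growing Phi, Psi by truncation).  Finally, comparing u with the admissible
  dilations s^2 u(./s) near s = 1 gives 2 Z_2(mu,nu) = int x.grad u dmu - int y.grad u dnu.
*)

theory Submission
  imports Defs
begin

definition linear_growth :: "('a::real_normed_vector \<Rightarrow> 'b::real_normed_vector) \<Rightarrow> bool" where
  "linear_growth f \<longleftrightarrow> (\<exists>C. \<forall>x. norm (f x) \<le> C * (1 + norm x))"

definition quadratic_growth :: "('a::real_normed_vector \<Rightarrow> 'b::real_normed_vector) \<Rightarrow> bool" where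
  "quadratic_growth f \<longleftrightarrow> (\<exists>C. \<forall>x. norm (f x) \<le> C * (1 + norm x ^ 2))"

named_theorems growth_intros

lemma linear_growthE:
  assumes "linear_growth f"
  obtains C where "0 \<le> C" "\<And>x. norm (f x) \<le> C * (1 + norm x)"
proof -
  obtain C where C: "\<And>x. norm (f x) \<le> C * (1 + norm x)"
    using assms unfolding linear_growth_def by blast
  have "0 \<le> C" using order_trans[OF norm_ge_zero C[of 0]] by simp
  with C show thesis using that by blast
qed

lemma quadratic_growthE:
  assumes "quadratic_growth f"
  obtains C where "0 \<le> C" "\<And>x. norm (f x) \<le> C * (1 + norm x ^ 2)"
proof -
  obtain C where C: "\<And>x. norm (f x) \<le> C * (1 + norm x ^ 2)"
    using assms unfolding quadratic_growth_def by blast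
  have "0 \<le> C" using order_trans[OF norm_ge_zero C[of 0]] by simp
  with C show thesis using that by blast
qed

lemma one_add_power2_le:
  fixes t :: real
  shows "(1 + t) ^ 2 \<le> 2 * (1 + t ^ 2)" "1 + t \<le> 2 * (1 + t ^ 2)"
proof -
  have "2 * t \<le> 1 + t ^ 2"
    using zero_le_power2[of "1 - t"] by (simp add: power2_diff)
  then show "(1 + t) ^ 2 \<le> 2 * (1 + t ^ 2)"
    by (simp add: power2_sum)
  show "1 + t \<le> 2 * (1 + t ^ 2)"
    using zero_le_power2[of "4 * t - 1"] by (simp add: power2_diff power_mult_distrib)
qed

lemma linear_growth_const [growth_intros]: "linear_growth (\<lambda>x. c)"
  unfolding linear_growth_def
  by (rule exI[of _ "norm c"]) (simp add: mult_le_cancel_left1)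

lemma linear_growth_ident [growth_intros]: "linear_growth (\<lambda>x. x)"
  unfolding linear_growth_def by (rule exI[of _ 1]) simp

lemma linear_growth_add [growth_intros]:
  assumes "linear_growth f" "linear_growth h"
  shows "linear_growth (\<lambda>x. f x + h x)"
proof -
  obtain C D where C: "\<And>x. norm (f x) \<le> C * (1 + norm x)" and D: "\<And>x. norm (h x) \<le> D * (1 + norm x)"
    using assms by (metis linear_growthE)
  have "norm (f x + h x) \<le> (C + D) * (1 + norm x)" for x
    using norm_triangle_ineq[of "f x" "h x"] add_mono[OF C[of x] D[of x]]
    by (simp add: distrib_right)
  then show ?thesis unfolding linear_growth_def by blast
qed

lemma linear_growth_scaleR [growth_intros]:
  assumes "linear_growth f"
  shows "linear_growth (\<lambda>x. c *\<^sub>R f x)"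
proof -
  obtain C where "\<And>x. norm (f x) \<le> C * (1 + norm x)"
    using assms by (metis linear_growthE)
  then have "norm (c *\<^sub>R f x) \<le> (\<bar>c\<bar> * C) * (1 + norm x)" for x
    by (simp add: mult.assoc mult_left_mono)
  then show ?thesis unfolding linear_growth_def by blast
qed

lemma linear_growth_diff [growth_intros]:
  assumes "linear_growth f" "linear_growth h"
  shows "linear_growth (\<lambda>x. f x - h x)"
  using linear_growth_add[OF assms(1) linear_growth_scaleR[OF assms(2), of "-1"]] by simp

lemma linear_growth_compose:
  assumes "linear_growth f" "linear_growth h"
  shows "linear_growth (\<lambda>x. f (h x))"
proof -
  obtain C D where C: "0 \<le> C" "\<And>y. norm (f y) \<le> C * (1 + norm y)"
    and D: "0 \<le> D" "\<And>x. norm (h x) \<le> D * (1 + norm x)"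
    using assms by (metis linear_growthE)
  have "norm (f (h x)) \<le> (C * (1 + D)) * (1 + norm x)" for x
  proof -
    have "norm (f (h x)) \<le> C * (1 + norm (h x))" by (rule C(2))
    also have "\<dots> \<le> C * (1 + D * (1 + norm x))"
      using C(1) D(2)[of x] by (intro mult_left_mono add_left_mono)
    also have "\<dots> \<le> (C * (1 + D)) * (1 + norm x)"
      using C(1) D(1) by (simp add: algebra_simps mult_left_mono)
    finally show ?thesis .
  qed
  then show ?thesis unfolding linear_growth_def by blast
qed

lemma linear_growth_compose_fst [growth_intros]:
  assumes "linear_growth f"
  shows "linear_growth (\<lambda>p. f (fst p))"
proof (rule linear_growth_compose[OF assms])
  have "norm (fst p) \<le> 1 * (1 + norm p)" for p :: "_ \<times> _"
    using norm_fst_le[of "fst p" "snd p"] by simp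
  then show "linear_growth (\<lambda>p. fst p)" unfolding linear_growth_def by blast
qed

lemma linear_growth_compose_snd [growth_intros]:
  assumes "linear_growth f"
  shows "linear_growth (\<lambda>p. f (snd p))"
proof (rule linear_growth_compose[OF assms])
  have "norm (snd p) \<le> 1 * (1 + norm p)" for p :: "_ \<times> _"
    using norm_snd_le[of "snd p" "fst p"] by simp
  then show "linear_growth (\<lambda>p. snd p)" unfolding linear_growth_def by blast
qed

lemma quadratic_growth_add [growth_intros]:
  assumes "quadratic_growth f" "quadratic_growth h"
  shows "quadratic_growth (\<lambda>x. f x + h x)"
proof -
  obtain C D where C: "\<And>x. norm (f x) \<le> C * (1 + norm x ^ 2)"
    and D: "\<And>x. norm (h x) \<le> D * (1 + norm x ^ 2)"
    using assms by (metis quadratic_growthE)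
  have "norm (f x + h x) \<le> (C + D) * (1 + norm x ^ 2)" for x
    using norm_triangle_ineq[of "f x" "h x"] add_mono[OF C[of x] D[of x]]
    by (simp add: distrib_right)
  then show ?thesis unfolding quadratic_growth_def by blast
qed

lemma quadratic_growth_scaleR [growth_intros]:
  assumes "quadratic_growth f"
  shows "quadratic_growth (\<lambda>x. c *\<^sub>R f x)"
proof -
  obtain C where "\<And>x. norm (f x) \<le> C * (1 + norm x ^ 2)"
    using assms by (metis quadratic_growthE)
  then have "norm (c *\<^sub>R f x) \<le> (\<bar>c\<bar> * C) * (1 + norm x ^ 2)" for x
    by (simp add: mult.assoc mult_left_mono)
  then show ?thesis unfolding quadratic_growth_def by blast
qed

lemma quadratic_growth_mult_left [growth_intros]:
  "quadratic_growth f \<Longrightarrow> quadratic_growth (\<lambda>x. c * f x :: real)"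
  using quadratic_growth_scaleR[of f c] by simp

lemma quadratic_growth_diff [growth_intros]:
  assumes "quadratic_growth f" "quadratic_growth h"
  shows "quadratic_growth (\<lambda>x. f x - h x)"
  using quadratic_growth_add[OF assms(1) quadratic_growth_scaleR[OF assms(2), of "-1"]] by simp

lemma quadratic_growth_inner [growth_intros]:
  fixes f h :: "'a::real_normed_vector \<Rightarrow> 'b::real_inner"
  assumes "linear_growth f" "linear_growth h"
  shows "quadratic_growth (\<lambda>x. f x \<bullet> h x)"
proof -
  obtain C D where C: "0 \<le> C" "\<And>x. norm (f x) \<le> C * (1 + norm x)"
    and D: "0 \<le> D" "\<And>x. norm (h x) \<le> D * (1 + norm x)"
    using assms by (metis linear_growthE)
  have "norm (f x \<bullet> h x) \<le> (2 * C * D) * (1 + norm x ^ 2)" for x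
  proof -
    have "norm (f x \<bullet> h x) \<le> norm (f x) * norm (h x)"
      by (simp add: Cauchy_Schwarz_ineq2)
    also have "\<dots> \<le> (C * (1 + norm x)) * (D * (1 + norm x))"
      using C D by (intro mult_mono) auto
    also have "\<dots> = C * D * (1 + norm x) ^ 2" by (simp add: power2_eq_square)
    also have "\<dots> \<le> C * D * (2 * (1 + norm x ^ 2))"
      using C(1) D(1) one_add_power2_le(1) by (intro mult_left_mono) auto
    finally show ?thesis by (simp add: algebra_simps)
  qed
  then show ?thesis unfolding quadratic_growth_def by blast
qed

lemma quadratic_growth_norm_power2 [growth_intros]:
  fixes f :: "'a::real_normed_vector \<Rightarrow> 'b::real_inner"
  shows "linear_growth f \<Longrightarrow> quadratic_growth (\<lambda>x. norm (f x) ^ 2)"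
  using quadratic_growth_inner[of f f] by (simp add: power2_norm_eq_inner)

lemma linear_imp_quadratic_growth:
  assumes "linear_growth f"
  shows "quadratic_growth f"
proof -
  obtain C where C: "0 \<le> C" "\<And>x. norm (f x) \<le> C * (1 + norm x)"
    using assms by (metis linear_growthE)
  have "norm (f x) \<le> (2 * C) * (1 + norm x ^ 2)" for x
  proof -
    have "norm (f x) \<le> C * (1 + norm x)" by (rule C(2))
    also have "\<dots> \<le> C * (2 * (1 + norm x ^ 2))"
      using C(1) one_add_power2_le(2) by (rule mult_left_mono[rotated])
    finally show ?thesis by (simp add: algebra_simps)
  qed
  then show ?thesis unfolding quadratic_growth_def by blast
qed

lemma quadratic_growth_const [growth_intros]: "quadratic_growth (\<lambda>x. c)"
  using linear_imp_quadratic_growth[OF linear_growth_const] .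

lemma quadratic_growth_divide [growth_intros]:
  "quadratic_growth f \<Longrightarrow> quadratic_growth (\<lambda>x. f x / c :: real)"
  using quadratic_growth_mult_left[of f "inverse c"] by (simp add: divide_inverse_commute)

lemma integrable_quadratic_growth:
  fixes f :: "'a::euclidean_space \<Rightarrow> 'b::{banach, second_countable_topology}"
  assumes "finite_measure M" "sets M = sets borel" "integrable M (\<lambda>x. norm x ^ 2)"
    and "f \<in> borel_measurable borel" "quadratic_growth f"
  shows "integrable M f"
proof -
  interpret finite_measure M by (rule assms(1))
  obtain C where C: "\<And>x. norm (f x) \<le> C * (1 + norm x ^ 2)"
    using assms(5) by (metis quadratic_growthE)
  show ?thesis
  proof (rule Bochner_Integration.integrable_bound)
    show "integrable M (\<lambda>x. C * (1 + norm x ^ 2))"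
      using assms(3) by auto
    show "f \<in> borel_measurable M"
      using assms(2,4) by (simp cong: measurable_cong_sets)
    show "AE x in M. norm (f x) \<le> norm (C * (1 + norm x ^ 2))"
      using C by (intro AE_I2) (metis abs_ge_self order_trans real_norm_def)
  qed
qed

section \<open>Potentials with 1-Lipschitz gradient\<close>

lemma grad_lip1_has_real_derivative_line:
  fixes u :: "'a::euclidean_space \<Rightarrow> real"
  assumes "grad_lip1 u g"
  shows "((\<lambda>t. u (x + t *\<^sub>R d)) has_real_derivative g (x + t *\<^sub>R d) \<bullet> d) (at t)"
proof -
  have "((\<lambda>t. x + t *\<^sub>R d) has_derivative (\<lambda>s. s *\<^sub>R d)) (at t)"
    by (auto intro!: derivative_eq_intros)
  moreover have "(u has_derivative (\<lambda>h. g (x + t *\<^sub>R d) \<bullet> h)) (at (x + t *\<^sub>R d))"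
    using assms unfolding grad_lip1_def by blast
  ultimately have "((\<lambda>t. u (x + t *\<^sub>R d)) has_derivative (\<lambda>s. g (x + t *\<^sub>R d) \<bullet> (s *\<^sub>R d))) (at t)"
    by (rule has_derivative_compose)
  then show ?thesis
    by (simp add: has_field_derivative_def mult_commute_abs)
qed

lemma grad_lip1_taylor:
  fixes u :: "'a::euclidean_space \<Rightarrow> real"
  assumes "grad_lip1 u g"
  shows "\<bar>u z - u x - g x \<bullet> (z - x)\<bar> \<le> norm (z - x) ^ 2 / 2"
proof -
  define d where "d = z - x"
  define f where "f t = u (x + t *\<^sub>R d) - t * (g x \<bullet> d)" for t
  have f': "(f has_real_derivative (g (x + t *\<^sub>R d) - g x) \<bullet> d) (at t)" for t
    unfolding f_def using grad_lip1_has_real_derivative_line[OF assms]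
    by (auto intro!: derivative_eq_intros simp: inner_diff_left)
  have f'_le: "\<bar>(g (x + t *\<^sub>R d) - g x) \<bullet> d\<bar> \<le> t * norm d ^ 2" if "0 \<le> t" for t
  proof -
    have "\<bar>(g (x + t *\<^sub>R d) - g x) \<bullet> d\<bar> \<le> norm (g (x + t *\<^sub>R d) - g x) * norm d"
      by (rule Cauchy_Schwarz_ineq2)
    also have "\<dots> \<le> norm (t *\<^sub>R d) * norm d"
      using assms unfolding grad_lip1_def by (metis add_diff_cancel_left' mult_right_mono norm_ge_zero)
    finally show ?thesis using that by (simp add: power2_eq_square mult.assoc)
  qed
  have "\<sigma> * (f 1 - f 0) \<le> norm d ^ 2 / 2" if "\<bar>\<sigma>\<bar> = 1" for \<sigma>
  proof -
    have "\<sigma> * f 1 - 1\<^sup>2 * norm d ^ 2 / 2 \<le> \<sigma> * f 0 - 0\<^sup>2 * norm d ^ 2 / 2"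
    proof (rule DERIV_nonpos_imp_nonincreasing[where f = "\<lambda>t. \<sigma> * f t - t\<^sup>2 * norm d ^ 2 / 2"])
      fix t :: real assume t: "0 \<le> t" "t \<le> 1"
      have "((\<lambda>t. \<sigma> * f t - t\<^sup>2 * norm d ^ 2 / 2) has_real_derivative
          \<sigma> * ((g (x + t *\<^sub>R d) - g x) \<bullet> d) - t * norm d ^ 2) (at t)"
        by (auto intro!: derivative_eq_intros f')
      moreover have "\<sigma> * ((g (x + t *\<^sub>R d) - g x) \<bullet> d) - t * norm d ^ 2 \<le> 0"
        using f'_le[OF t(1)] \<open>\<bar>\<sigma>\<bar> = 1\<close> by (auto simp: abs_le_iff abs_if split: if_splits)
      ultimately show "\<exists>y. ((\<lambda>t. \<sigma> * f t - t\<^sup>2 * norm d ^ 2 / 2) has_real_derivative y) (at t) \<and> y \<le> 0"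
        by blast
    qed simp
    then show ?thesis by (simp add: algebra_simps)
  qed
  from this[of 1] this[of "-1"] have "\<bar>f 1 - f 0\<bar> \<le> norm d ^ 2 / 2"
    by (intro abs_leI) simp_all
  then show ?thesis
    unfolding f_def d_def by (simp add: algebra_simps)
qed

lemma grad_lip1_continuous_on:
  assumes "grad_lip1 u g"
  shows "continuous_on UNIV u" "continuous_on UNIV g"
proof -
  show "continuous_on UNIV u"
    using assms unfolding grad_lip1_def
    by (metis continuous_at_imp_continuous_on has_derivative_continuous)
  have "1-lipschitz_on UNIV g"
    using assms unfolding grad_lip1_def by (intro lipschitz_onI) (auto simp: dist_norm)
  then show "continuous_on UNIV g" by (rule lipschitz_on_continuous_on)
qed

lemma grad_lip1_borel_measurable:
  assumes "grad_lip1 u g"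
  shows "u \<in> borel_measurable borel" "g \<in> borel_measurable borel"
  using grad_lip1_continuous_on[OF assms] by (auto intro: borel_measurable_continuous_onI)

lemma grad_lip1_linear_growth:
  assumes "grad_lip1 u g"
  shows "linear_growth g"
proof -
  have "norm (g x - g 0) \<le> 1 * (1 + norm x)" for x
    using assms unfolding grad_lip1_def by (metis diff_zero add_increasing zero_le_one mult_1)
  then have "linear_growth (\<lambda>x. g x - g 0)"
    unfolding linear_growth_def by blast
  from linear_growth_add[OF this linear_growth_const[of "g 0"]] show ?thesis by simp
qed

lemma grad_lip1_quadratic_growth:
  fixes u :: "'a::euclidean_space \<Rightarrow> real"
  assumes "grad_lip1 u g"
  shows "quadratic_growth u"
proof -
  have "norm (u x - u 0 - g 0 \<bullet> x) \<le> (1/2) * (1 + norm x ^ 2)" for x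
    using grad_lip1_taylor[OF assms, of x 0] by simp
  then have "quadratic_growth (\<lambda>x. u x - u 0 - g 0 \<bullet> x)"
    unfolding quadratic_growth_def by blast
  moreover have "quadratic_growth (\<lambda>x. u 0 + g 0 \<bullet> x)"
    by (intro growth_intros)
  ultimately have "quadratic_growth (\<lambda>x. (u x - u 0 - g 0 \<bullet> x) + (u 0 + g 0 \<bullet> x))"
    by (rule quadratic_growth_add)
  then show ?thesis by simp
qed

lemma grad_lip1_convex_support:
  fixes u :: "'a::euclidean_space \<Rightarrow> real"
  assumes "grad_lip1 u g" "\<bar>s\<bar> \<le> 1"
  shows "norm y ^ 2 / 2 + s * u y + (y + s *\<^sub>R g y) \<bullet> (y' - y) \<le> norm y' ^ 2 / 2 + s * u y'"
proof -
  have "\<bar>s * (u y' - u y - g y \<bullet> (y' - y))\<bar> \<le> \<bar>u y' - u y - g y \<bullet> (y' - y)\<bar>"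
    using assms(2) by (simp add: abs_mult mult_left_le_one_le)
  also have "\<dots> \<le> norm (y' - y) ^ 2 / 2"
    by (rule grad_lip1_taylor[OF assms(1)])
  finally have "- (norm (y' - y) ^ 2 / 2) \<le> s * (u y' - u y - g y \<bullet> (y' - y))"
    by (simp add: abs_le_iff)
  moreover have "norm y' ^ 2 / 2 + s * u y' - (norm y ^ 2 / 2 + s * u y + (y + s *\<^sub>R g y) \<bullet> (y' - y))
      = norm (y' - y) ^ 2 / 2 + s * (u y' - u y - g y \<bullet> (y' - y))"
    by (simp add: power2_norm_eq_inner inner_diff_left inner_diff_right inner_add_left inner_commute
        algebra_simps add_divide_distrib diff_divide_distrib)
  ultimately show ?thesis by linarith
qed

lemma grad_lip1_dilate:
  fixes u :: "'a::euclidean_space \<Rightarrow> real"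
  assumes u: "grad_lip1 u g" and s: "s > 0"
  shows "grad_lip1 (\<lambda>x. s^2 * u (x /\<^sub>R s)) (\<lambda>x. s *\<^sub>R g (x /\<^sub>R s))"
  unfolding grad_lip1_def
proof (intro conjI allI)
  fix x :: 'a
  have "((\<lambda>x. x /\<^sub>R s) has_derivative (\<lambda>h. h /\<^sub>R s)) (at x)"
    by (auto intro!: derivative_eq_intros)
  moreover have "(u has_derivative (\<lambda>h. g (x /\<^sub>R s) \<bullet> h)) (at (x /\<^sub>R s))"
    using u unfolding grad_lip1_def by blast
  ultimately have "((\<lambda>x. u (x /\<^sub>R s)) has_derivative (\<lambda>h. g (x /\<^sub>R s) \<bullet> (h /\<^sub>R s))) (at x)"
    by (rule has_derivative_compose)
  then have "((\<lambda>x. s^2 * u (x /\<^sub>R s)) has_derivative (\<lambda>h. s^2 * (g (x /\<^sub>R s) \<bullet> (h /\<^sub>R s)))) (at x)"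
    by (rule has_derivative_mult_right)
  moreover have "(\<lambda>h. s^2 * (g (x /\<^sub>R s) \<bullet> (h /\<^sub>R s))) = (\<lambda>h. (s *\<^sub>R g (x /\<^sub>R s)) \<bullet> h)"
    using s by (auto simp: fun_eq_iff power2_eq_square)
  ultimately show "((\<lambda>x. s^2 * u (x /\<^sub>R s)) has_derivative (\<lambda>h. (s *\<^sub>R g (x /\<^sub>R s)) \<bullet> h)) (at x)"
    by simp
next
  fix x y :: 'a
  have "norm (g (x /\<^sub>R s) - g (y /\<^sub>R s)) \<le> norm (x /\<^sub>R s - y /\<^sub>R s)"
    using u unfolding grad_lip1_def by blast
  also have "\<dots> = norm (x - y) / s"
    using s by (simp flip: scaleR_diff_right add: divide_inverse_commute)
  finally show "norm (s *\<^sub>R g (x /\<^sub>R s) - s *\<^sub>R g (y /\<^sub>R s)) \<le> norm (x - y)"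
    using s by (simp flip: scaleR_diff_right add: pos_le_divide_eq mult.commute)
qed

lemma grad_lip1_dilate_taylor:
  fixes u :: "'a::euclidean_space \<Rightarrow> real"
  assumes u: "grad_lip1 u g" and s: "s > 0"
  shows "\<bar>s^2 * u (x /\<^sub>R s) - s^2 * u x - s * (1 - s) * (x \<bullet> g x)\<bar> \<le> (1 - s)^2 / 2 * norm x ^ 2"
proof -
  have x_s: "x /\<^sub>R s - x = (inverse s - 1) *\<^sub>R x" by (simp add: scaleR_diff_left)
  have r: "\<bar>u (x /\<^sub>R s) - u x - (inverse s - 1) * (x \<bullet> g x)\<bar> \<le> (inverse s - 1)^2 * norm x ^ 2 / 2"
    using grad_lip1_taylor[OF u, of "x /\<^sub>R s" x] unfolding x_s
    by (simp add: inner_commute power_mult_distrib)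
  have "s^2 * u (x /\<^sub>R s) - s^2 * u x - s * (1 - s) * (x \<bullet> g x)
      = s^2 * (u (x /\<^sub>R s) - u x - (inverse s - 1) * (x \<bullet> g x))"
    using s by (simp add: field_simps power2_eq_square)
  then have "\<bar>s^2 * u (x /\<^sub>R s) - s^2 * u x - s * (1 - s) * (x \<bullet> g x)\<bar>
      = s^2 * \<bar>u (x /\<^sub>R s) - u x - (inverse s - 1) * (x \<bullet> g x)\<bar>"
    by (simp add: abs_mult)
  also have "\<dots> \<le> s^2 * ((inverse s - 1)^2 * norm x ^ 2 / 2)"
    using r by (rule mult_left_mono) simp
  also have "\<dots> = (1 - s)^2 / 2 * norm x ^ 2"
    using s by (simp add: field_simps power2_eq_square)
  finally show ?thesis .
qed

section \<open>The value \<open>Z2\<close>\<close>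

lemma P2bD:
  assumes "M \<in> P2b b"
  shows "prob_space M" "sets M = sets borel" "integrable M (\<lambda>x. norm x ^ 2)" "(\<integral>x. x \<partial>M) = b"
  using assms unfolding P2b_def by auto

lemma integrable_P2b:
  fixes f :: "'a::euclidean_space \<Rightarrow> 'b::{banach, second_countable_topology}"
  assumes "M \<in> P2b b" "f \<in> borel_measurable borel" "quadratic_growth f"
  shows "integrable M f"
proof -
  note M = P2bD[OF assms(1)]
  show ?thesis
    by (rule integrable_quadratic_growth[OF prob_space.finite_measure[OF M(1)] M(2,3) assms(2,3)])
qed

lemma P2b_potential_bound:
  fixes v :: "'a::euclidean_space \<Rightarrow> real"
  assumes M: "M \<in> P2b b" and v: "grad_lip1 v h"
  shows "\<bar>(\<integral>x. v x \<partial>M) - v b\<bar> \<le> (\<integral>x. norm (x - b) ^ 2 \<partial>M) / 2"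
proof -
  interpret prob_space M using P2bD[OF M] by simp
  note [measurable] = grad_lip1_borel_measurable[OF v]
  have iv: "integrable M v"
    by (rule integrable_P2b[OF M _ grad_lip1_quadratic_growth[OF v]]) measurable
  have ix: "integrable M (\<lambda>x. x)"
    by (rule integrable_P2b[OF M _ linear_imp_quadratic_growth[OF linear_growth_ident]]) simp
  have ib: "integrable M (\<lambda>x. norm (x - b) ^ 2)"
    by (rule integrable_P2b[OF M], measurable, intro growth_intros)
  have "(\<integral>x. v x - v b - h b \<bullet> (x - b) \<partial>M) = (\<integral>x. v x \<partial>M) - v b"
    using iv ix P2bD(4)[OF M] by (simp add: inner_diff_right prob_space)
  moreover have "\<bar>\<integral>x. v x - v b - h b \<bullet> (x - b) \<partial>M\<bar> \<le> (\<integral>x. norm (x - b) ^ 2 / 2 \<partial>M)"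
    using iv ix ib grad_lip1_taylor[OF v]
    by (intro order_trans[OF integral_abs_bound] integral_mono) (auto simp: inner_diff_right)
  ultimately show ?thesis by simp
qed

lemma potential_le_Z2:
  fixes v :: "'a::euclidean_space \<Rightarrow> real"
  assumes M: "\<mu> \<in> P2b b" and N: "\<nu> \<in> P2b b" and v: "grad_lip1 v h"
  shows "(\<integral>x. v x \<partial>\<mu>) - (\<integral>x. v x \<partial>\<nu>) \<le> Z2 \<mu> \<nu>"
proof -
  let ?S = "{(\<integral>x. u x \<partial>\<mu>) - (\<integral>x. u x \<partial>\<nu>) | u. \<exists>g. grad_lip1 u g}"
  have "bdd_above ?S"
  proof (rule bdd_aboveI)
    fix z assume "z \<in> ?S"
    then obtain w k where z: "z = (\<integral>x. w x \<partial>\<mu>) - (\<integral>x. w x \<partial>\<nu>)" and w: "grad_lip1 w k"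
      by blast
    show "z \<le> (\<integral>x. norm (x - b) ^ 2 \<partial>\<mu>) / 2 + (\<integral>x. norm (x - b) ^ 2 \<partial>\<nu>) / 2"
      using P2b_potential_bound[OF M w] P2b_potential_bound[OF N w] unfolding z abs_le_iff
      by linarith
  qed
  moreover have "(\<integral>x. v x \<partial>\<mu>) - (\<integral>x. v x \<partial>\<nu>) \<in> ?S" using v by blast
  ultimately show ?thesis unfolding Z2_def by (intro cSup_upper) auto
qed

lemma Z2_dilation_ineq:
  fixes u :: "'a::euclidean_space \<Rightarrow> real"
  assumes M: "\<mu> \<in> P2b b" and N: "\<nu> \<in> P2b b" and opt: "optimal_potential \<mu> \<nu> u g" and s: "s > 0"
  shows "s^2 * Z2 \<mu> \<nu> + s * (1 - s) * ((\<integral>x. x \<bullet> g x \<partial>\<mu>) - (\<integral>x. x \<bullet> g x \<partial>\<nu>))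
          \<le> Z2 \<mu> \<nu> + (1 - s)^2 / 2 * ((\<integral>x. norm x ^ 2 \<partial>\<mu>) + (\<integral>x. norm x ^ 2 \<partial>\<nu>))"
proof -
  have u: "grad_lip1 u g" and Z2_eq: "(\<integral>x. u x \<partial>\<mu>) - (\<integral>x. u x \<partial>\<nu>) = Z2 \<mu> \<nu>"
    using opt unfolding optimal_potential_def by auto
  note [measurable] = grad_lip1_borel_measurable[OF u]
  define w where "w x = s^2 * u (x /\<^sub>R s)" for x
  have w: "grad_lip1 w (\<lambda>x. s *\<^sub>R g (x /\<^sub>R s))"
    unfolding w_def by (rule grad_lip1_dilate[OF u s])
  note [measurable] = grad_lip1_borel_measurable[OF w]
  define D where "D x = w x - s^2 * u x - s * (1 - s) * (x \<bullet> g x)" for x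
  have D_bound: "\<bar>D x\<bar> \<le> (1 - s)^2 / 2 * norm x ^ 2" for x
    unfolding D_def w_def by (rule grad_lip1_dilate_taylor[OF u s])
  have integral_D:
      "(\<integral>x. w x \<partial>M) = s^2 * (\<integral>x. u x \<partial>M) + s * (1 - s) * (\<integral>x. x \<bullet> g x \<partial>M) + (\<integral>x. D x \<partial>M)"
      "\<bar>\<integral>x. D x \<partial>M\<bar> \<le> (1 - s)^2 / 2 * (\<integral>x. norm x ^ 2 \<partial>M)"
    if M: "M \<in> P2b b" for M
  proof -
    have "integrable M w"
      by (rule integrable_P2b[OF M _ grad_lip1_quadratic_growth[OF w]]) measurable
    moreover have "integrable M u"
      by (rule integrable_P2b[OF M _ grad_lip1_quadratic_growth[OF u]]) measurable
    moreover have "integrable M (\<lambda>x. x \<bullet> g x)"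
      by (rule integrable_P2b[OF M], measurable, intro growth_intros grad_lip1_linear_growth[OF u])
    ultimately have iD: "integrable M D" and "(\<integral>x. D x \<partial>M) = (\<integral>x. w x \<partial>M) - s^2 * (\<integral>x. u x \<partial>M)
        - s * (1 - s) * (\<integral>x. x \<bullet> g x \<partial>M)"
      unfolding D_def by simp_all
    then show "(\<integral>x. w x \<partial>M) = s^2 * (\<integral>x. u x \<partial>M) + s * (1 - s) * (\<integral>x. x \<bullet> g x \<partial>M) + (\<integral>x. D x \<partial>M)"
      by simp
    have "\<bar>\<integral>x. D x \<partial>M\<bar> \<le> (\<integral>x. (1 - s)^2 / 2 * norm x ^ 2 \<partial>M)"
      using iD P2bD(3)[OF M] D_bound by (intro order_trans[OF integral_abs_bound] integral_mono) auto
    then show "\<bar>\<integral>x. D x \<partial>M\<bar> \<le> (1 - s)^2 / 2 * (\<integral>x. norm x ^ 2 \<partial>M)" by simp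
  qed
  have "(\<integral>x. w x \<partial>\<mu>) - (\<integral>x. w x \<partial>\<nu>) \<le> Z2 \<mu> \<nu>" by (rule potential_le_Z2[OF M N w])
  with integral_D[OF M] integral_D[OF N] Z2_eq show ?thesis
    by (simp add: algebra_simps abs_le_iff)
qed

lemma optimal_potential_Z2_eq:
  fixes u :: "'a::euclidean_space \<Rightarrow> real"
  assumes M: "\<mu> \<in> P2b b" and N: "\<nu> \<in> P2b b" and opt: "optimal_potential \<mu> \<nu> u g"
  shows "2 * Z2 \<mu> \<nu> = (\<integral>x. x \<bullet> g x \<partial>\<mu>) - (\<integral>x. x \<bullet> g x \<partial>\<nu>)"
proof -
  define J where "J = (\<integral>x. x \<bullet> g x \<partial>\<mu>) - (\<integral>x. x \<bullet> g x \<partial>\<nu>)"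
  define m where "m = (\<integral>x. norm x ^ 2 \<partial>\<mu>) + (\<integral>x. norm x ^ 2 \<partial>\<nu>)"
  define F where "F s = s^2 * Z2 \<mu> \<nu> + s * (1 - s) * J - Z2 \<mu> \<nu> - (1 - s)^2 / 2 * m" for s
  have "(F has_real_derivative 2 * Z2 \<mu> \<nu> - J) (at 1)"
    unfolding F_def by (auto intro!: derivative_eq_intros)
  moreover have "\<forall>s. \<bar>1 - s\<bar> < 1 \<longrightarrow> F s \<le> F 1"
  proof (intro allI impI)
    fix s :: real assume "\<bar>1 - s\<bar> < 1"
    then have "0 < s" by simp
    from Z2_dilation_ineq[OF M N opt this] have "F s \<le> 0"
      unfolding F_def J_def m_def by simp
    then show "F s \<le> F 1" unfolding F_def by simp
  qed
  ultimately have "2 * Z2 \<mu> \<nu> - J = 0"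
    by (rule DERIV_local_max[OF _ zero_less_one])
  then show ?thesis unfolding J_def by simp
qed

lemma borel_measurable_fst_prod [measurable]:
  "fst \<in> borel_measurable (borel :: ('a::euclidean_space \<times> 'b::euclidean_space) measure)"
  by (intro borel_measurable_continuous_onI continuous_on_fst continuous_on_id)

lemma borel_measurable_snd_prod [measurable]:
  "snd \<in> borel_measurable (borel :: ('a::euclidean_space \<times> 'b::euclidean_space) measure)"
  by (intro borel_measurable_continuous_onI continuous_on_snd continuous_on_id)

lemma couplingsD:
  assumes "\<gamma> \<in> couplings \<mu> \<nu>"
  shows "prob_space \<gamma>" "sets \<gamma> = sets borel" "distr \<gamma> borel fst = \<mu>" "distr \<gamma> borel snd = \<nu>"
  using assms unfolding couplings_def by auto

lemma couplings_marginals: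
  assumes "\<gamma> \<in> couplings \<mu> \<nu>"
  shows "prob_space \<mu>" "sets \<mu> = sets borel" "prob_space \<nu>" "sets \<nu> = sets borel"
proof -
  note c = couplingsD[OF assms]
  have "fst \<in> \<gamma> \<rightarrow>\<^sub>M borel" "snd \<in> \<gamma> \<rightarrow>\<^sub>M borel"
    using c(2) by (simp_all cong: measurable_cong_sets)
  then show "prob_space \<mu>" "prob_space \<nu>"
    using prob_space.prob_space_distr[OF c(1)] c(3,4) by metis+
  show "sets \<mu> = sets borel" "sets \<nu> = sets borel"
    using c(3,4) by (metis sets_distr)+
qed

lemma couplings_swap:
  assumes "\<gamma> \<in> couplings \<mu> \<nu>"
  shows "distr \<gamma> borel (\<lambda>p. (snd p, fst p)) \<in> couplings \<nu> \<mu>"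
proof -
  note c = couplingsD[OF assms]
  have swap: "(\<lambda>p. (snd p, fst p)) \<in> \<gamma> \<rightarrow>\<^sub>M borel"
    by (subst measurable_cong_sets[OF c(2) refl]) measurable
  show ?thesis
    unfolding couplings_def
    using prob_space.prob_space_distr[OF c(1) swap] distr_distr[OF _ swap, of fst borel]
      distr_distr[OF _ swap, of snd borel] c(3,4)
    by (simp add: comp_def)
qed

lemma couplings_integral_fst:
  fixes f :: "'a::euclidean_space \<Rightarrow> 'c::{banach, second_countable_topology}"
  assumes "\<gamma> \<in> couplings \<mu> (\<nu> :: 'b::euclidean_space measure)" "f \<in> borel_measurable borel"
  shows "(\<integral>p. f (fst p) \<partial>\<gamma>) = (\<integral>x. f x \<partial>\<mu>)"
    and "integrable \<gamma> (\<lambda>p. f (fst p)) \<longleftrightarrow> integrable \<mu> f"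
proof -
  note c = couplingsD[OF assms(1)]
  have "fst \<in> measurable \<gamma> borel" using c(2) by (simp cong: measurable_cong_sets)
  from integral_distr[OF this assms(2)] integrable_distr_eq[OF this assms(2)]
  show "(\<integral>p. f (fst p) \<partial>\<gamma>) = (\<integral>x. f x \<partial>\<mu>)" "integrable \<gamma> (\<lambda>p. f (fst p)) \<longleftrightarrow> integrable \<mu> f"
    unfolding c(3) by simp_all
qed

lemma couplings_integral_snd:
  fixes f :: "'b::euclidean_space \<Rightarrow> 'c::{banach, second_countable_topology}"
  assumes "\<gamma> \<in> couplings (\<mu> :: 'a::euclidean_space measure) \<nu>" "f \<in> borel_measurable borel"
  shows "(\<integral>p. f (snd p) \<partial>\<gamma>) = (\<integral>y. f y \<partial>\<nu>)"
    and "integrable \<gamma> (\<lambda>p. f (snd p)) \<longleftrightarrow> integrable \<nu> f"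
proof -
  note c = couplingsD[OF assms(1)]
  have "snd \<in> measurable \<gamma> borel" using c(2) by (simp cong: measurable_cong_sets)
  from integral_distr[OF this assms(2)] integrable_distr_eq[OF this assms(2)]
  show "(\<integral>p. f (snd p) \<partial>\<gamma>) = (\<integral>y. f y \<partial>\<nu>)" "integrable \<gamma> (\<lambda>p. f (snd p)) \<longleftrightarrow> integrable \<nu> f"
    unfolding c(4) by simp_all
qed

lemma couplings_integrable_norm_power2:
  fixes \<mu> :: "'a::euclidean_space measure" and \<nu> :: "'b::euclidean_space measure"
  assumes "\<gamma> \<in> couplings \<mu> \<nu>" "integrable \<mu> (\<lambda>x. norm x ^ 2)" "integrable \<nu> (\<lambda>y. norm y ^ 2)"
  shows "integrable \<gamma> (\<lambda>p. norm p ^ 2)"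
proof -
  have "integrable \<gamma> (\<lambda>p. norm (fst p) ^ 2 + norm (snd p) ^ 2)"
    using assms couplings_integral_fst(2)[OF assms(1), of "\<lambda>x. norm x ^ 2"]
      couplings_integral_snd(2)[OF assms(1), of "\<lambda>y. norm y ^ 2"] by simp
  moreover have "norm p ^ 2 = norm (fst p) ^ 2 + norm (snd p) ^ 2" for p :: "'a \<times> 'b"
    by (cases p) (simp add: norm_Pair)
  ultimately show ?thesis by simp
qed

lemma integrable_couplings:
  fixes f :: "'a::euclidean_space \<times> 'b::euclidean_space \<Rightarrow> 'c::{banach, second_countable_topology}"
  assumes "\<gamma> \<in> couplings \<mu> \<nu>" "integrable \<mu> (\<lambda>x. norm x ^ 2)" "integrable \<nu> (\<lambda>y. norm y ^ 2)"
    and "f \<in> borel_measurable borel" "quadratic_growth f"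
  shows "integrable \<gamma> f"
proof (rule integrable_quadratic_growth)
  show "finite_measure \<gamma>" "sets \<gamma> = sets borel"
    using couplingsD[OF assms(1)] by (simp_all add: prob_space.finite_measure)
  show "integrable \<gamma> (\<lambda>p. norm p ^ 2)"
    using assms(1-3) by (rule couplings_integrable_norm_power2)
qed fact+

lemma couplings_AE_snd:
  assumes "\<pi> \<in> couplings \<alpha> \<beta>" "AE w in \<beta>. P w" "{w \<in> space borel. P w} \<in> sets borel"
  shows "AE p in \<pi>. P (snd p)"
proof -
  have "snd \<in> \<pi> \<rightarrow>\<^sub>M borel"
    using couplingsD(2)[OF assms(1)] by (simp cong: measurable_cong_sets)
  moreover have "AE w in distr \<pi> borel snd. P w"
    unfolding couplingsD(4)[OF assms(1)] by (rule assms(2))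
  ultimately show ?thesis
    by (subst (asm) AE_distr_iff[OF _ assms(3)])
qed

lemma couplings_weak_duality:
  fixes \<alpha> :: "'a::euclidean_space measure" and \<beta> :: "'b::euclidean_space measure"
    and f :: "'a \<Rightarrow> real" and h :: "'b \<Rightarrow> real"
  assumes \<pi>: "\<pi> \<in> couplings \<alpha> \<beta>"
    and [measurable]: "f \<in> borel_measurable borel" "h \<in> borel_measurable borel"
    and "integrable \<alpha> f" "integrable \<beta> h" "integrable \<pi> c"
    and "AE p in \<pi>. f (fst p) + h (snd p) \<le> c p"
  shows "(\<integral>x. f x \<partial>\<alpha>) + (\<integral>w. h w \<partial>\<beta>) \<le> (\<integral>p. c p \<partial>\<pi>)"
proof -
  have "integrable \<pi> (\<lambda>p. f (fst p))" "integrable \<pi> (\<lambda>p. h (snd p))"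
    using assms(4,5) couplings_integral_fst(2)[OF \<pi>, of f] couplings_integral_snd(2)[OF \<pi>, of h]
    by simp_all
  then have "(\<integral>p. f (fst p) + h (snd p) \<partial>\<pi>) \<le> (\<integral>p. c p \<partial>\<pi>)"
    using assms(6,7) by (intro integral_mono_AE) auto
  with \<open>integrable \<pi> (\<lambda>p. f (fst p))\<close> \<open>integrable \<pi> (\<lambda>p. h (snd p))\<close> show ?thesis
    by (simp add: couplings_integral_fst(1)[OF \<pi>] couplings_integral_snd(1)[OF \<pi>])
qed

section \<open>The cost of \<open>zeta\<close> on \<open>Gamma_bar\<close>\<close>

lemma integral_inner_test_extend:
  fixes h Z :: "'b \<Rightarrow> 'a::euclidean_space"
  assumes test: "\<And>\<Phi>::'a \<Rightarrow> 'a. \<Phi> \<in> borel_measurable borel \<Longrightarrow> bounded (range \<Phi>) \<Longrightarrow>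
        (\<integral>p. \<Phi> (h p) \<bullet> Z p \<partial>\<gamma>) = (\<integral>x. \<Phi> x \<bullet> x \<partial>distr \<gamma> borel h)"
    and h: "h \<in> borel_measurable \<gamma>" and Z: "Z \<in> borel_measurable \<gamma>"
    and \<Phi>: "\<Phi> \<in> borel_measurable borel"
    and int_Z: "integrable \<gamma> (\<lambda>p. \<Phi> (h p) \<bullet> Z p)" and int_h: "integrable \<gamma> (\<lambda>p. \<Phi> (h p) \<bullet> h p)"
  shows "(\<integral>p. \<Phi> (h p) \<bullet> (Z p - h p) \<partial>\<gamma>) = 0"
proof -
  note [measurable] = h Z \<Phi>
  define \<Phi>n where "\<Phi>n n x = (if norm (\<Phi> x) \<le> real n then \<Phi> x else 0)" for n :: nat and x
  have [measurable]: "\<Phi>n n \<in> borel_measurable borel" for n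
    unfolding \<Phi>n_def by measurable
  have le: "\<bar>\<Phi>n n x \<bullet> v\<bar> \<le> \<bar>\<Phi> x \<bullet> v\<bar>" for n x v
    unfolding \<Phi>n_def by auto
  have int_n: "integrable \<gamma> (\<lambda>p. \<Phi>n n (h p) \<bullet> Z p)" "integrable \<gamma> (\<lambda>p. \<Phi>n n (h p) \<bullet> h p)" for n
  proof -
    show "integrable \<gamma> (\<lambda>p. \<Phi>n n (h p) \<bullet> Z p)"
      by (rule Bochner_Integration.integrable_bound[OF int_Z]) (simp_all add: le)
    show "integrable \<gamma> (\<lambda>p. \<Phi>n n (h p) \<bullet> h p)"
      by (rule Bochner_Integration.integrable_bound[OF int_h]) (simp_all add: le)
  qed
  have "(\<integral>p. \<Phi>n n (h p) \<bullet> (Z p - h p) \<partial>\<gamma>) = 0" for n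
  proof -
    have "bounded (range (\<Phi>n n))"
      unfolding bounded_iff \<Phi>n_def by (intro exI[of _ "real n"]) auto
    from test[OF _ this] have "(\<integral>p. \<Phi>n n (h p) \<bullet> Z p \<partial>\<gamma>) = (\<integral>p. \<Phi>n n (h p) \<bullet> h p \<partial>\<gamma>)"
      by (simp add: integral_distr)
    then show ?thesis using int_n by (simp add: inner_diff_right)
  qed
  moreover have "(\<lambda>n. \<integral>p. \<Phi>n n (h p) \<bullet> (Z p - h p) \<partial>\<gamma>) \<longlonglongrightarrow> (\<integral>p. \<Phi> (h p) \<bullet> (Z p - h p) \<partial>\<gamma>)"
  proof (rule integral_dominated_convergence[where w = "\<lambda>p. norm (\<Phi> (h p) \<bullet> (Z p - h p))"])
    show "integrable \<gamma> (\<lambda>p. norm (\<Phi> (h p) \<bullet> (Z p - h p)))"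
      using int_Z int_h by (simp add: inner_diff_right)
    show "AE p in \<gamma>. (\<lambda>n. \<Phi>n n (h p) \<bullet> (Z p - h p)) \<longlonglongrightarrow> \<Phi> (h p) \<bullet> (Z p - h p)"
    proof (intro AE_I2 tendsto_eventually)
      fix p
      obtain N :: nat where N: "norm (\<Phi> (h p)) \<le> real N" using real_arch_simple by blast
      have "\<Phi>n n (h p) = \<Phi> (h p)" if "N \<le> n" for n
        using N that unfolding \<Phi>n_def by (metis of_nat_le_iff order_trans)
      then show "\<forall>\<^sub>F n in sequentially. \<Phi>n n (h p) \<bullet> (Z p - h p) = \<Phi> (h p) \<bullet> (Z p - h p)"
        unfolding eventually_sequentially by (intro exI[of _ N]) simp
    qed
  qed (use le in auto)
  ultimately show ?thesis by (simp add: LIMSEQ_const_iff)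
qed

lemma zeta_borel_measurable [measurable]:
  assumes "g \<in> borel_measurable borel"
  shows "zeta g \<in> borel_measurable (borel :: ('a::euclidean_space \<times> 'a) measure)"
  unfolding zeta_def[abs_def] using assms by measurable

lemma zeta_linear_growth: "linear_growth g \<Longrightarrow> linear_growth (zeta g)"
  unfolding zeta_def[abs_def] by (intro growth_intros)

lemma density_in_QD:
  assumes "density_in_Q \<mu> \<nu> \<gamma> f"
  shows "integrable \<gamma> f"
    and "\<And>\<Phi>. \<Phi> \<in> borel_measurable borel \<Longrightarrow> bounded (range \<Phi>) \<Longrightarrow>
      (\<integral>p. \<Phi> (fst p) \<bullet> f p \<partial>\<gamma>) = (\<integral>x. \<Phi> x \<bullet> x \<partial>\<mu>)"
    and "\<And>\<Psi>. \<Psi> \<in> borel_measurable borel \<Longrightarrow> bounded (range \<Psi>) \<Longrightarrow>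
      (\<integral>p. \<Psi> (snd p) \<bullet> f p \<partial>\<gamma>) = (\<integral>y. \<Psi> y \<bullet> y \<partial>\<nu>)"
  using assms unfolding density_in_Q_def by auto

lemma Gamma_bar_orthogonal:
  fixes \<Phi> :: "'a::euclidean_space \<Rightarrow> 'a"
  assumes G: "\<gamma> \<in> Gamma_bar \<mu> \<nu> g" and M: "\<mu> \<in> P2b b" and N: "\<nu> \<in> P2b c"
    and g: "g \<in> borel_measurable borel" "linear_growth g"
    and \<Phi>: "\<Phi> \<in> borel_measurable borel" "linear_growth \<Phi>"
  shows "(\<integral>p. \<Phi> (fst p) \<bullet> (zeta g p - fst p) \<partial>\<gamma>) = 0"
    and "(\<integral>p. \<Phi> (snd p) \<bullet> (zeta g p - snd p) \<partial>\<gamma>) = 0"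
proof -
  have \<gamma>: "\<gamma> \<in> couplings \<mu> \<nu>" and Q: "density_in_Q \<mu> \<nu> \<gamma> (zeta g)"
    using G unfolding Gamma_bar_def Gamma_def by auto
  note c = couplingsD[OF \<gamma>]
  note [measurable] = g(1) \<Phi>(1)
  have meas: "f \<in> borel_measurable \<gamma>" if "f \<in> borel_measurable borel" for f :: "'a \<times> 'a \<Rightarrow> 'a"
    using that c(2) by (simp cong: measurable_cong_sets)
  have int: "integrable \<gamma> (\<lambda>p. \<Phi> (fst p) \<bullet> zeta g p)" "integrable \<gamma> (\<lambda>p. \<Phi> (fst p) \<bullet> fst p)"
    "integrable \<gamma> (\<lambda>p. \<Phi> (snd p) \<bullet> zeta g p)" "integrable \<gamma> (\<lambda>p. \<Phi> (snd p) \<bullet> snd p)"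
    by (rule integrable_couplings[OF \<gamma> P2bD(3)[OF M] P2bD(3)[OF N]], measurable,
        intro growth_intros zeta_linear_growth \<Phi>(2) g(2))+
  show "(\<integral>p. \<Phi> (fst p) \<bullet> (zeta g p - fst p) \<partial>\<gamma>) = 0"
    using density_in_QD(2)[OF Q, folded c(3)]
    by (rule integral_inner_test_extend[where h = fst and Z = "zeta g", OF _ meas meas \<Phi>(1) int(1,2)];
        measurable)
  show "(\<integral>p. \<Phi> (snd p) \<bullet> (zeta g p - snd p) \<partial>\<gamma>) = 0"
    using density_in_QD(3)[OF Q, folded c(4)]
    by (rule integral_inner_test_extend[where h = snd and Z = "zeta g", OF _ meas meas \<Phi>(1) int(3,4)];
        measurable)
qed

lemma zeta_cost_identity:
  fixes g :: "'a::euclidean_space \<Rightarrow> 'a"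
  shows "norm (y - zeta g (x, y)) ^ 2 / 2 + norm (x - zeta g (x, y)) ^ 2 / 2
    = (x \<bullet> g x - y \<bullet> g y) / 2 - (x - g x) \<bullet> (zeta g (x, y) - x) / 2
      - (y + g y) \<bullet> (zeta g (x, y) - y) / 2"
  unfolding zeta_def power2_norm_eq_inner
  by (simp add: inner_add_left inner_add_right inner_diff_left inner_diff_right inner_commute
      algebra_simps add_divide_distrib diff_divide_distrib)

lemma Gamma_bar_zeta_cost_eq_Z2:
  fixes u :: "'a::euclidean_space \<Rightarrow> real"
  assumes M: "\<mu> \<in> P2b b" and N: "\<nu> \<in> P2b b" and opt: "optimal_potential \<mu> \<nu> u g"
    and G: "\<gamma> \<in> Gamma_bar \<mu> \<nu> g"
  shows "(\<integral>p. norm (snd p - zeta g p) ^ 2 / 2 + norm (fst p - zeta g p) ^ 2 / 2 \<partial>\<gamma>) = Z2 \<mu> \<nu>"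
proof -
  have \<gamma>: "\<gamma> \<in> couplings \<mu> \<nu>" using G unfolding Gamma_bar_def Gamma_def by auto
  have u: "grad_lip1 u g" using opt unfolding optimal_potential_def by simp
  note g = grad_lip1_borel_measurable(2)[OF u] grad_lip1_linear_growth[OF u]
  note [measurable] = g(1)
  note orth = Gamma_bar_orthogonal[OF G M N g]
  have int: "integrable \<gamma> (\<lambda>p. fst p \<bullet> g (fst p))" "integrable \<gamma> (\<lambda>p. snd p \<bullet> g (snd p))"
    "integrable \<gamma> (\<lambda>p. (fst p - g (fst p)) \<bullet> (zeta g p - fst p))"
    "integrable \<gamma> (\<lambda>p. (snd p + g (snd p)) \<bullet> (zeta g p - snd p))"
    by (rule integrable_couplings[OF \<gamma> P2bD(3)[OF M] P2bD(3)[OF N]], measurable,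
        intro growth_intros zeta_linear_growth g(2))+
  have "norm (snd p - zeta g p) ^ 2 / 2 + norm (fst p - zeta g p) ^ 2 / 2
      = (fst p \<bullet> g (fst p) - snd p \<bullet> g (snd p)) / 2
        - (fst p - g (fst p)) \<bullet> (zeta g p - fst p) / 2 - (snd p + g (snd p)) \<bullet> (zeta g p - snd p) / 2"
    for p using zeta_cost_identity[of "snd p" g "fst p"] by simp
  then have "(\<integral>p. norm (snd p - zeta g p) ^ 2 / 2 + norm (fst p - zeta g p) ^ 2 / 2 \<partial>\<gamma>)
      = (\<integral>p. (fst p \<bullet> g (fst p) - snd p \<bullet> g (snd p)) / 2
          - (fst p - g (fst p)) \<bullet> (zeta g p - fst p) / 2 - (snd p + g (snd p)) \<bullet> (zeta g p - snd p) / 2 \<partial>\<gamma>)"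
    by simp
  also have "\<dots> = ((\<integral>p. fst p \<bullet> g (fst p) \<partial>\<gamma>) - (\<integral>p. snd p \<bullet> g (snd p) \<partial>\<gamma>)) / 2
      - (\<integral>p. (fst p - g (fst p)) \<bullet> (zeta g p - fst p) \<partial>\<gamma>) / 2
      - (\<integral>p. (snd p + g (snd p)) \<bullet> (zeta g p - snd p) \<partial>\<gamma>) / 2"
    using int by simp
  also have "\<dots> = ((\<integral>x. x \<bullet> g x \<partial>\<mu>) - (\<integral>y. y \<bullet> g y \<partial>\<nu>)) / 2"
    using orth(1)[of "\<lambda>x. x - g x"] orth(2)[of "\<lambda>y. y + g y"] g(2)
      couplings_integral_fst(1)[OF \<gamma>, of "\<lambda>x. x \<bullet> g x"] couplings_integral_snd(1)[OF \<gamma>, of "\<lambda>y. y \<bullet> g y"]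
    by (simp add: growth_intros)
  also have "\<dots> = Z2 \<mu> \<nu>"
    using optimal_potential_Z2_eq[OF M N opt] by simp
  finally show ?thesis .
qed

lemma ennreal_Z2_eq_zeta_cost:
  fixes u :: "'a::euclidean_space \<Rightarrow> real"
  assumes M: "\<mu> \<in> P2b b" and N: "\<nu> \<in> P2b b" and opt: "optimal_potential \<mu> \<nu> u g"
    and G: "\<gamma> \<in> Gamma_bar \<mu> \<nu> g"
  shows "ennreal (Z2 \<mu> \<nu>) =
    ennreal (1/2) * (\<integral>\<^sup>+p. ennreal (norm (snd p - zeta g p) ^ 2) \<partial>\<gamma>) +
    ennreal (1/2) * (\<integral>\<^sup>+p. ennreal (norm (fst p - zeta g p) ^ 2) \<partial>\<gamma>)"
proof -
  have \<gamma>: "\<gamma> \<in> couplings \<mu> \<nu>" using G unfolding Gamma_bar_def Gamma_def by auto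
  have u: "grad_lip1 u g" using opt unfolding optimal_potential_def by simp
  note [measurable] = grad_lip1_borel_measurable(2)[OF u]
  have int: "integrable \<gamma> (\<lambda>p. norm (snd p - zeta g p) ^ 2)"
    "integrable \<gamma> (\<lambda>p. norm (fst p - zeta g p) ^ 2)"
    by (rule integrable_couplings[OF \<gamma> P2bD(3)[OF M] P2bD(3)[OF N]], measurable,
        intro growth_intros zeta_linear_growth grad_lip1_linear_growth[OF u])+
  define A where "A = (\<integral>p. norm (snd p - zeta g p) ^ 2 \<partial>\<gamma>)"
  define B where "B = (\<integral>p. norm (fst p - zeta g p) ^ 2 \<partial>\<gamma>)"
  have "A \<ge> 0" "B \<ge> 0" unfolding A_def B_def by simp_all
  have "Z2 \<mu> \<nu> = A / 2 + B / 2"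
    using Gamma_bar_zeta_cost_eq_Z2[OF M N opt G] int unfolding A_def B_def by simp
  have half: "ennreal (x / 2) = ennreal (1/2) * ennreal x" if "0 \<le> x" for x
    using that by (subst ennreal_mult[symmetric]) auto
  have "ennreal (Z2 \<mu> \<nu>) = ennreal (A / 2) + ennreal (B / 2)"
    unfolding \<open>Z2 \<mu> \<nu> = A / 2 + B / 2\<close> using \<open>A \<ge> 0\<close> \<open>B \<ge> 0\<close> by (intro ennreal_plus) auto
  also have "\<dots> = ennreal (1/2) * ennreal A + ennreal (1/2) * ennreal B"
    by (simp only: half[OF \<open>A \<ge> 0\<close>] half[OF \<open>B \<ge> 0\<close>])
  finally show ?thesis
    using int unfolding A_def B_def by (simp add: nn_integral_eq_integral)
qed

section \<open>Gradients of convex functions are optimal maps\<close>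

lemma W2sq_le_map_cost:
  fixes \<alpha> :: "'a::euclidean_space measure"
  assumes "prob_space \<alpha>" "sets \<alpha> = sets borel" and [measurable]: "T \<in> borel_measurable borel"
  shows "W2sq \<alpha> (distr \<alpha> borel T) \<le> (\<integral>\<^sup>+y. ennreal (norm (y - T y) ^ 2) \<partial>\<alpha>)"
proof -
  have graph: "(\<lambda>y. (y, T y)) \<in> \<alpha> \<rightarrow>\<^sub>M borel"
    using assms(2) by (simp cong: measurable_cong_sets)
  define \<pi> where "\<pi> = distr \<alpha> borel (\<lambda>y. (y, T y))"
  have "\<pi> \<in> couplings \<alpha> (distr \<alpha> borel T)"
    unfolding couplings_def \<pi>_def
    using prob_space.prob_space_distr[OF assms(1) graph] distr_distr[OF _ graph, of fst borel]
      distr_distr[OF _ graph, of snd borel] distr_id2[OF assms(2)[symmetric]]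
    by (simp add: comp_def)
  then have "W2sq \<alpha> (distr \<alpha> borel T) \<le> (\<integral>\<^sup>+p. ennreal (norm (fst p - snd p) ^ 2) \<partial>\<pi>)"
    unfolding W2sq_def by (rule INF_lower)
  also have "\<dots> = (\<integral>\<^sup>+y. ennreal (norm (y - T y) ^ 2) \<partial>\<alpha>)"
    unfolding \<pi>_def by (simp add: nn_integral_distr[OF graph])
  finally show ?thesis .
qed

lemma fenchel_conjugate_exists:
  fixes \<phi> :: "'a::euclidean_space \<Rightarrow> real" and T :: "'a \<Rightarrow> 'a"
  assumes \<phi>: "continuous_on UNIV \<phi>" and support: "\<And>y y'. \<phi> y + T y \<bullet> (y' - y) \<le> \<phi> y'"
  obtains \<psi> :: "'a \<Rightarrow> ereal"
  where "\<And>y w. ereal (y \<bullet> w - \<phi> y) \<le> \<psi> w"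
    and "\<And>y. \<psi> (T y) = ereal (y \<bullet> T y - \<phi> y)"
    and "\<psi> \<in> borel_measurable borel"
proof -
  obtain D :: "'a set" where D: "countable D" "\<And>X. open X \<Longrightarrow> X \<noteq> {} \<Longrightarrow> \<exists>d\<in>D. d \<in> X"
    using countable_dense_setE by blast
  \<comment> \<open>a countable dense index set keeps \<open>\<psi>\<close> Borel; by continuity it is the full conjugate\<close>
  define \<psi> where "\<psi> w = (SUP y\<in>D. ereal (y \<bullet> w - \<phi> y))" for w
  have young: "ereal (y \<bullet> w - \<phi> y) \<le> \<psi> w" for y w
  proof (rule ereal_le_epsilon2)
    fix e :: real assume "0 < e"
    have "open {z. y \<bullet> w - \<phi> y - e < z \<bullet> w - \<phi> z}"
      by (intro open_Collect_less continuous_intros \<phi>)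
    moreover have "y \<in> {z. y \<bullet> w - \<phi> y - e < z \<bullet> w - \<phi> z}"
      using \<open>0 < e\<close> by simp
    ultimately obtain d where d: "d \<in> D" "y \<bullet> w - \<phi> y - e < d \<bullet> w - \<phi> d"
      using D(2) by blast
    have "ereal (y \<bullet> w - \<phi> y) \<le> ereal (d \<bullet> w - \<phi> d) + ereal e"
      using d(2) by simp
    also have "\<dots> \<le> \<psi> w + ereal e"
      unfolding \<psi>_def using d(1) by (intro add_right_mono SUP_upper)
    finally show "ereal (y \<bullet> w - \<phi> y) \<le> \<psi> w + ereal e" .
  qed
  have "\<psi> (T y) = ereal (y \<bullet> T y - \<phi> y)" for y
  proof (rule antisym)
    have "y' \<bullet> T y - \<phi> y' \<le> y \<bullet> T y - \<phi> y" for y'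
      using support[of y y'] by (simp add: inner_diff_right inner_commute)
    then show "\<psi> (T y) \<le> ereal (y \<bullet> T y - \<phi> y)"
      unfolding \<psi>_def by (intro SUP_least) simp
  qed (rule young)
  moreover have "\<psi> \<in> borel_measurable borel"
  proof -
    have "(\<lambda>w. ereal (y \<bullet> w - \<phi> y)) \<in> borel_measurable borel" for y
      by (intro borel_measurable_continuous_onI continuous_intros)
    then show ?thesis
      unfolding \<psi>_def using D(1) by (intro borel_measurable_SUP)
  qed
  ultimately show ?thesis using that young by blast
qed

lemma gradient_map_cost_le_coupling_cost:
  fixes \<alpha> :: "'a::euclidean_space measure" and T :: "'a \<Rightarrow> 'a" and \<phi> :: "'a \<Rightarrow> real"
  assumes \<alpha>: "prob_space \<alpha>" "sets \<alpha> = sets borel" "integrable \<alpha> (\<lambda>y. norm y ^ 2)"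
    and T: "continuous_on UNIV T" "linear_growth T"
    and \<phi>: "continuous_on UNIV \<phi>" "quadratic_growth \<phi>"
    and support: "\<And>y y'. \<phi> y + T y \<bullet> (y' - y) \<le> \<phi> y'"
    and \<pi>: "\<pi> \<in> couplings \<alpha> (distr \<alpha> borel T)"
  shows "(\<integral>\<^sup>+y. ennreal (norm (y - T y) ^ 2) \<partial>\<alpha>) \<le> (\<integral>\<^sup>+p. ennreal (norm (fst p - snd p) ^ 2) \<partial>\<pi>)"
proof -
  have [measurable]: "T \<in> borel_measurable borel" "\<phi> \<in> borel_measurable borel"
    using T(1) \<phi>(1) by (auto intro: borel_measurable_continuous_onI)
  have T_meas: "T \<in> \<alpha> \<rightarrow>\<^sub>M borel" using \<alpha>(2) by (simp cong: measurable_cong_sets)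
  have int_\<alpha>: "integrable \<alpha> f" if "f \<in> borel_measurable borel" "quadratic_growth f" for f :: "'a \<Rightarrow> real"
    by (rule integrable_quadratic_growth[OF prob_space.finite_measure[OF \<alpha>(1)] \<alpha>(2,3) that])
  obtain \<psi> where young: "\<And>y w. ereal (y \<bullet> w - \<phi> y) \<le> \<psi> w"
    and \<psi>_T: "\<And>y. \<psi> (T y) = ereal (y \<bullet> T y - \<phi> y)" and [measurable]: "\<psi> \<in> borel_measurable borel"
    using fenchel_conjugate_exists[OF \<phi>(1) support] by blast
  \<comment> \<open>a Kantorovich dual pair for the cost \<open>|x - w|\<^sup>2\<close>, tight on the graph of \<open>T\<close>\<close>
  define F1 where "F1 y = norm y ^ 2 - 2 * \<phi> y" for y
  define F2 where "F2 w = norm w ^ 2 - 2 * real_of_ereal (\<psi> w)" for w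
  have F_meas [measurable]: "F1 \<in> borel_measurable borel" "F2 \<in> borel_measurable borel"
    unfolding F1_def F2_def by measurable
  have F2_T: "F2 (T y) = norm (T y) ^ 2 - 2 * (y \<bullet> T y - \<phi> y)" for y
    unfolding F2_def \<psi>_T by simp
  have on_graph: "norm (y - T y) ^ 2 = F1 y + F2 (T y)" for y
    unfolding F1_def F2_T
    by (simp add: power2_norm_eq_inner inner_diff_left inner_diff_right inner_commute)
  have below: "F1 x + F2 w \<le> norm (x - w) ^ 2" if "\<psi> w < \<infinity>" for x w
  proof -
    have "\<psi> w = ereal (real_of_ereal (\<psi> w))"
      using young[of 0 w] that by (cases "\<psi> w") auto
    then have "x \<bullet> w - \<phi> x \<le> real_of_ereal (\<psi> w)"
      using young[of x w] by (metis ereal_less_eq(3))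
    then show ?thesis
      unfolding F1_def F2_def
      by (simp add: power2_norm_eq_inner inner_diff_left inner_diff_right inner_commute)
  qed
  have int_F1: "integrable \<alpha> F1"
    unfolding F1_def by (rule int_\<alpha>, measurable, intro growth_intros \<phi>(2))
  have int_F2_T: "integrable \<alpha> (\<lambda>y. F2 (T y))"
    unfolding F2_T by (rule int_\<alpha>, measurable, intro growth_intros \<phi>(2) T(2))
  then have int_F2: "integrable (distr \<alpha> borel T) F2"
    by (simp add: integrable_distr_eq[OF T_meas])
  have "integrable \<alpha> (\<lambda>y. norm (T y) ^ 2)"
    by (rule int_\<alpha>, measurable, intro growth_intros T(2))
  then have "integrable (distr \<alpha> borel T) (\<lambda>w. norm w ^ 2)"
    by (simp add: integrable_distr_eq[OF T_meas])
  then have int_cost: "integrable \<pi> (\<lambda>p. norm (fst p - snd p) ^ 2)"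
    by (rule integrable_couplings[OF \<pi> \<alpha>(3)], measurable, intro growth_intros)
  have finite: "{w \<in> space borel. \<psi> w < \<infinity>} \<in> sets borel" by measurable
  have "AE w in distr \<alpha> borel T. \<psi> w < \<infinity>"
    by (subst AE_distr_iff[OF T_meas finite]) (simp add: \<psi>_T)
  then have "AE p in \<pi>. \<psi> (snd p) < \<infinity>"
    by (rule couplings_AE_snd[OF \<pi> _ finite])
  then have "AE p in \<pi>. F1 (fst p) + F2 (snd p) \<le> norm (fst p - snd p) ^ 2"
    using below by (auto elim: AE_mp)
  from couplings_weak_duality[OF \<pi> F_meas int_F1 int_F2 int_cost this]
  have "(\<integral>y. norm (y - T y) ^ 2 \<partial>\<alpha>) \<le> (\<integral>p. norm (fst p - snd p) ^ 2 \<partial>\<pi>)"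
    using int_F1 int_F2_T by (simp add: on_graph integral_distr[OF T_meas])
  moreover have "integrable \<alpha> (\<lambda>y. norm (y - T y) ^ 2)"
    by (rule int_\<alpha>, measurable, intro growth_intros T(2))
  ultimately show ?thesis
    using int_cost by (simp add: nn_integral_eq_integral ennreal_leI)
qed

lemma W2sq_gradient_map:
  fixes \<alpha> :: "'a::euclidean_space measure" and T :: "'a \<Rightarrow> 'a" and \<phi> :: "'a \<Rightarrow> real"
  assumes \<alpha>: "prob_space \<alpha>" "sets \<alpha> = sets borel" "integrable \<alpha> (\<lambda>y. norm y ^ 2)"
    and T: "continuous_on UNIV T" "linear_growth T"
    and \<phi>: "continuous_on UNIV \<phi>" "quadratic_growth \<phi>"
    and support: "\<And>y y'. \<phi> y + T y \<bullet> (y' - y) \<le> \<phi> y'"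
  shows "W2sq \<alpha> (distr \<alpha> borel T) = (\<integral>\<^sup>+y. ennreal (norm (y - T y) ^ 2) \<partial>\<alpha>)"
proof (rule antisym)
  show "W2sq \<alpha> (distr \<alpha> borel T) \<le> (\<integral>\<^sup>+y. ennreal (norm (y - T y) ^ 2) \<partial>\<alpha>)"
    using T(1) by (intro W2sq_le_map_cost[OF \<alpha>(1,2)] borel_measurable_continuous_onI)
  show "(\<integral>\<^sup>+y. ennreal (norm (y - T y) ^ 2) \<partial>\<alpha>) \<le> W2sq \<alpha> (distr \<alpha> borel T)"
    unfolding W2sq_def
    by (intro INF_greatest gradient_map_cost_le_coupling_cost[OF \<alpha> T \<phi> support])
qed

lemma W2sq_translated_gradient_map:
  fixes \<alpha> :: "'a::euclidean_space measure" and T :: "'a \<Rightarrow> 'a" and \<phi> :: "'a \<Rightarrow> real"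
  assumes \<alpha>: "prob_space \<alpha>" "sets \<alpha> = sets borel" "integrable \<alpha> (\<lambda>y. norm y ^ 2)"
    and T: "continuous_on UNIV T" "linear_growth T"
    and \<phi>: "continuous_on UNIV \<phi>" "quadratic_growth \<phi>"
    and support: "\<And>y y'. \<phi> y + T y \<bullet> (y' - y) \<le> \<phi> y'"
  shows "W2sq \<alpha> (distr \<alpha> borel (\<lambda>y. c + T y)) = (\<integral>\<^sup>+y. ennreal (norm (y - (c + T y)) ^ 2) \<partial>\<alpha>)"
proof (rule W2sq_gradient_map[OF \<alpha>, where \<phi> = "\<lambda>y. \<phi> y + c \<bullet> y"])
  show "\<phi> y + c \<bullet> y + (c + T y) \<bullet> (y' - y) \<le> \<phi> y' + c \<bullet> y'" for y y'
    using support[of y y'] by (simp add: inner_add_left inner_diff_right)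
qed (intro continuous_intros growth_intros T \<phi>)+

section \<open>Disintegrations\<close>

lemma sets_pair_measure_borel:
  assumes "sets M = sets (borel :: 'a::euclidean_space measure)"
  shows "sets (M \<Otimes>\<^sub>M (borel :: 'b::euclidean_space measure)) = sets (borel :: ('a \<times> 'b) measure)"
proof -
  have "sets (M \<Otimes>\<^sub>M (borel :: 'b measure)) = sets (borel \<Otimes>\<^sub>M (borel :: 'b measure))"
    by (rule sets_pair_measure_cong[OF assms refl])
  also have "\<dots> = sets (borel :: ('a \<times> 'b) measure)"
    by (rule arg_cong[where f = sets, OF borel_prod])
  finally show ?thesis .
qed

lemma disint_fst_kernel:
  assumes "disint_fst M K \<gamma>"
  shows "K \<in> M \<rightarrow>\<^sub>M subprob_algebra borel"
    and "\<And>x. x \<in> space M \<Longrightarrow> prob_space (K x)"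
    and "\<And>x. x \<in> space M \<Longrightarrow> sets (K x) = sets borel"
proof -
  have K: "K \<in> M \<rightarrow>\<^sub>M prob_algebra borel"
    using assms unfolding disint_fst_def by simp
  then show "K \<in> M \<rightarrow>\<^sub>M subprob_algebra borel" by (rule measurable_prob_algebraD)
  show "prob_space (K x)" "sets (K x) = sets borel" if "x \<in> space M" for x
    using measurable_space[OF K that] unfolding space_prob_algebra by auto
qed

lemma disint_fst_eq_bind:
  fixes M :: "'a::euclidean_space measure" and K :: "'a \<Rightarrow> 'b::euclidean_space measure"
  assumes D: "disint_fst M K \<gamma>" and M: "sets M = sets borel" "space M \<noteq> {}"
    and \<gamma>: "sets \<gamma> = sets borel"
  shows "\<gamma> = M \<bind> (\<lambda>x. distr (K x) borel (Pair x))"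
    and "(\<lambda>x. distr (K x) borel (Pair x)) \<in> M \<rightarrow>\<^sub>M subprob_algebra borel"
proof -
  have "(\<lambda>(x, y). (x, y)) \<in> M \<Otimes>\<^sub>M borel \<rightarrow>\<^sub>M (borel :: ('a \<times> 'b) measure)"
    by (subst measurable_cong_sets[OF sets_pair_measure_borel[OF M(1)] refl]) simp
  from measurable_distr2[OF this disint_fst_kernel(1)[OF D]]
  show kernel: "(\<lambda>x. distr (K x) borel (Pair x)) \<in> M \<rightarrow>\<^sub>M subprob_algebra borel"
    by simp
  show "\<gamma> = M \<bind> (\<lambda>x. distr (K x) borel (Pair x))"
  proof (rule measure_eqI)
    show "sets \<gamma> = sets (M \<bind> (\<lambda>x. distr (K x) borel (Pair x)))"
      using \<gamma> by (subst sets_bind[OF _ M(2)]) auto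
    fix A assume "A \<in> sets \<gamma>"
    then have A: "A \<in> sets borel" using \<gamma> by simp
    have "emeasure (M \<bind> (\<lambda>x. distr (K x) borel (Pair x))) A
        = (\<integral>\<^sup>+x. emeasure (distr (K x) borel (Pair x)) A \<partial>M)"
      by (rule emeasure_bind[OF M(2) kernel A])
    also have "\<dots> = (\<integral>\<^sup>+x. emeasure (K x) (Pair x -` A) \<partial>M)"
    proof (rule nn_integral_cong)
      fix x assume "x \<in> space M"
      note sets_K = disint_fst_kernel(3)[OF D this]
      have "Pair x \<in> K x \<rightarrow>\<^sub>M borel"
        by (subst measurable_cong_sets[OF sets_K refl]) simp
      then show "emeasure (distr (K x) borel (Pair x)) A = emeasure (K x) (Pair x -` A)"
        using A sets_eq_imp_space_eq[OF sets_K] by (simp add: emeasure_distr)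
    qed
    finally show "emeasure \<gamma> A = emeasure (M \<bind> (\<lambda>x. distr (K x) borel (Pair x))) A"
      using D A unfolding disint_fst_def by simp
  qed
qed

lemma disint_fst_nn_integral:
  fixes M :: "'a::euclidean_space measure" and K :: "'a \<Rightarrow> 'b::euclidean_space measure"
  assumes D: "disint_fst M K \<gamma>" and M: "sets M = sets borel" "space M \<noteq> {}"
    and \<gamma>: "sets \<gamma> = sets borel" and f: "f \<in> borel_measurable borel"
  shows "(\<integral>\<^sup>+p. f p \<partial>\<gamma>) = (\<integral>\<^sup>+x. \<integral>\<^sup>+y. f (x, y) \<partial>K x \<partial>M)"
proof -
  note bind = disint_fst_eq_bind[OF D M \<gamma>]
  have "(\<integral>\<^sup>+p. f p \<partial>\<gamma>) = (\<integral>\<^sup>+x. \<integral>\<^sup>+p. f p \<partial>distr (K x) borel (Pair x) \<partial>M)"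
    by (subst bind(1)) (rule nn_integral_bind[OF f bind(2)])
  also have "\<dots> = (\<integral>\<^sup>+x. \<integral>\<^sup>+y. f (x, y) \<partial>K x \<partial>M)"
  proof (rule nn_integral_cong)
    fix x assume "x \<in> space M"
    note sets_K = disint_fst_kernel(3)[OF D this]
    have "Pair x \<in> K x \<rightarrow>\<^sub>M borel"
      by (subst measurable_cong_sets[OF sets_K refl]) simp
    moreover have "f \<in> borel_measurable (distr (K x) borel (Pair x))"
      using f by (subst measurable_cong_sets[OF sets_distr refl])
    ultimately show "(\<integral>\<^sup>+p. f p \<partial>distr (K x) borel (Pair x)) = (\<integral>\<^sup>+y. f (x, y) \<partial>K x)"
      by (rule nn_integral_distr)
  qed
  finally show ?thesis .
qed

lemma nn_integral_kernel_measurable: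
  fixes M :: "'a::euclidean_space measure" and K :: "'a \<Rightarrow> 'b::euclidean_space measure"
  assumes "sets M = sets borel" "K \<in> M \<rightarrow>\<^sub>M subprob_algebra borel"
    and "f \<in> borel_measurable borel"
  shows "(\<lambda>x. \<integral>\<^sup>+y. f (x, y) \<partial>K x) \<in> borel_measurable M"
proof -
  have "(\<lambda>(x, y). f (x, y)) \<in> borel_measurable (M \<Otimes>\<^sub>M borel)"
    by (subst measurable_cong_sets[OF sets_pair_measure_borel[OF assms(1)] refl]) (simp add: assms(3))
  then show ?thesis using nn_integral_measurable_subprob_algebra2[OF _ assms(2)] by blast
qed

lemma disint_snd_swap:
  fixes \<nu> :: "'b::euclidean_space measure" and K :: "'b \<Rightarrow> 'a::euclidean_space measure"
  assumes D: "disint_snd \<nu> K \<gamma>" and \<gamma>: "sets \<gamma> = sets borel"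
  shows "disint_fst \<nu> K (distr \<gamma> borel (\<lambda>p. (snd p, fst p)))"
  unfolding disint_fst_def
proof (intro conjI ballI)
  show "K \<in> \<nu> \<rightarrow>\<^sub>M prob_algebra borel" using D unfolding disint_snd_def by simp
  fix A :: "('b \<times> 'a) set" assume A: "A \<in> sets borel"
  have swap: "(\<lambda>p. (snd p, fst p)) \<in> (borel :: ('a \<times> 'b) measure) \<rightarrow>\<^sub>M borel"
    by measurable
  then have "(\<lambda>p. (snd p, fst p)) -` A \<in> sets borel"
    using measurable_sets[OF swap A] by simp
  then show "emeasure (distr \<gamma> borel (\<lambda>p. (snd p, fst p))) A = (\<integral>\<^sup>+y. emeasure (K y) (Pair y -` A) \<partial>\<nu>)"
    using D \<gamma> swap A unfolding disint_snd_def
    by (simp add: emeasure_distr sets_eq_imp_space_eq vimage_def cong: measurable_cong_sets)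
qed

lemma borel_countable_Int_stable_generator:
  obtains G :: "'b::second_countable_topology set set"
  where "countable G" "Int_stable G" "UNIV \<in> G" "sets borel = sigma_sets UNIV G" "G \<subseteq> sets borel"
proof -
  obtain B :: "'b set set" where B: "countable B" "topological_basis B" using ex_countable_basis by blast
  define G where "G = (\<lambda>F. \<Inter>F) ` {F. finite F \<and> F \<subseteq> B}"
  have cG: "countable G" unfolding G_def using countable_Collect_finite_subset[OF B(1)] by simp
  have iG: "Int_stable G"
  proof (rule Int_stableI)
    fix a b assume "a \<in> G" "b \<in> G"
    then obtain F1 F2 where "finite F1" "F1 \<subseteq> B" "a = \<Inter>F1" "finite F2" "F2 \<subseteq> B" "b = \<Inter>F2"
      unfolding G_def by auto
    then have "a \<inter> b = \<Inter>(F1 \<union> F2)" "finite (F1 \<union> F2)" "F1 \<union> F2 \<subseteq> B" by auto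
    then show "a \<inter> b \<in> G" unfolding G_def by blast
  qed
  have uG: "UNIV \<in> G" unfolding G_def by (rule image_eqI[of _ _ "{}"]) auto
  have oG: "open a" if "a \<in> G" for a
    using that B(2) unfolding G_def by (auto intro!: open_Inter simp: topological_basis_open)
  have BG: "B \<subseteq> G" unfolding G_def by (auto intro!: image_eqI[of _ _ "{b}" for b])
  have sG: "sets borel = sigma_sets UNIV G"
    unfolding sets_borel
  proof (rule sigma_sets_eqI)
    fix a :: "'b set" assume "a \<in> {S. open S}"
    then obtain B' where "B' \<subseteq> B" "\<Union>B' = a" using B(2) unfolding topological_basis_def by blast
    moreover have "countable B'" using \<open>B' \<subseteq> B\<close> B(1) countable_subset by blast
    ultimately show "a \<in> sigma_sets UNIV G"
      using BG by (blast intro: sigma_sets_UNION)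
  next
    fix b assume "b \<in> G" then show "b \<in> sigma_sets UNIV {S. open S}" using oG by auto
  qed
  have "G \<subseteq> sets borel" using oG by auto
  with cG iG uG sG show ?thesis by (rule that)
qed

lemma disint_fst_pushforward_emeasure:
  fixes M :: "'a::euclidean_space measure" and K :: "'a \<Rightarrow> 'b::euclidean_space measure"
    and K1 :: "'a \<Rightarrow> 'c::euclidean_space measure" and Z :: "'a \<times> 'b \<Rightarrow> 'c"
  assumes D: "disint_fst M K \<gamma>" and D1: "disint_fst M K1 (distr \<gamma> borel (\<lambda>p. (fst p, Z p)))"
    and [measurable]: "Z \<in> borel_measurable borel"
    and M: "prob_space M" "sets M = sets borel" and \<gamma>: "sets \<gamma> = sets borel"
    and A: "A \<in> sets borel"
  shows "AE x in M. emeasure (K1 x) A = emeasure (distr (K x) borel (\<lambda>y. Z (x, y))) A"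
proof (rule finite_measure.density_unique_finite_measure[OF prob_space.finite_measure[OF M(1)]])
  have "(\<lambda>(x, y). Z (x, y)) \<in> M \<Otimes>\<^sub>M borel \<rightarrow>\<^sub>M borel"
    by (subst measurable_cong_sets[OF sets_pair_measure_borel[OF M(2)] refl]) simp
  from measurable_distr2[OF this disint_fst_kernel(1)[OF D]]
  have "(\<lambda>x. distr (K x) borel (\<lambda>y. Z (x, y))) \<in> M \<rightarrow>\<^sub>M subprob_algebra borel" by simp
  then show "(\<lambda>x. emeasure (distr (K x) borel (\<lambda>y. Z (x, y))) A) \<in> borel_measurable M"
    using measurable_emeasure_subprob_algebra[OF A] by (rule measurable_compose)
  show "(\<lambda>x. emeasure (K1 x) A) \<in> borel_measurable M"
    using disint_fst_kernel(1)[OF D1] measurable_emeasure_subprob_algebra[OF A]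
    by (rule measurable_compose)
  fix B assume "B \<in> sets M"
  then have B: "B \<in> sets borel" using M(2) by simp
  have BA: "B \<times> A \<in> sets (borel :: ('a \<times> 'c) measure)"
    using B A by (simp flip: borel_prod)
  have "(\<integral>\<^sup>+x. emeasure (K1 x) A * indicator B x \<partial>M)
      = (\<integral>\<^sup>+x. emeasure (K1 x) (Pair x -` (B \<times> A)) \<partial>M)"
    by (intro nn_integral_cong) (auto simp: indicator_def)
  also have "\<dots> = emeasure (distr \<gamma> borel (\<lambda>p. (fst p, Z p))) (B \<times> A)"
    using D1 BA unfolding disint_fst_def by simp
  also have "\<dots> = emeasure \<gamma> ((\<lambda>p. (fst p, Z p)) -` (B \<times> A) \<inter> space \<gamma>)"
    by (rule emeasure_distr[OF _ BA]) (subst measurable_cong_sets[OF \<gamma> refl]; measurable)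
  also have "(\<lambda>p. (fst p, Z p)) -` (B \<times> A) \<inter> space \<gamma> = {p. fst p \<in> B \<and> Z p \<in> A}"
    using sets_eq_imp_space_eq[OF \<gamma>] by auto
  also have "emeasure \<gamma> {p. fst p \<in> B \<and> Z p \<in> A}
      = (\<integral>\<^sup>+x. emeasure (K x) (Pair x -` {p. fst p \<in> B \<and> Z p \<in> A}) \<partial>M)"
    using D B A unfolding disint_fst_def by simp
  also have "\<dots> = (\<integral>\<^sup>+x. emeasure (distr (K x) borel (\<lambda>y. Z (x, y))) A * indicator B x \<partial>M)"
  proof (rule nn_integral_cong)
    fix x assume "x \<in> space M"
    note sets_K = disint_fst_kernel(3)[OF D this]
    have "(\<lambda>y. Z (x, y)) \<in> K x \<rightarrow>\<^sub>M borel"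
      by (subst measurable_cong_sets[OF sets_K refl]) simp
    then show "emeasure (K x) (Pair x -` {p. fst p \<in> B \<and> Z p \<in> A})
        = emeasure (distr (K x) borel (\<lambda>y. Z (x, y))) A * indicator B x"
      using A sets_eq_imp_space_eq[OF sets_K] by (simp add: emeasure_distr indicator_def vimage_def)
  qed
  finally show "(\<integral>\<^sup>+x. emeasure (K1 x) A * indicator B x \<partial>M)
      = (\<integral>\<^sup>+x. emeasure (distr (K x) borel (\<lambda>y. Z (x, y))) A * indicator B x \<partial>M)" .
qed auto

lemma disint_fst_pushforward:
  fixes M :: "'a::euclidean_space measure" and K :: "'a \<Rightarrow> 'b::euclidean_space measure"
    and K1 :: "'a \<Rightarrow> 'c::euclidean_space measure" and Z :: "'a \<times> 'b \<Rightarrow> 'c"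
  assumes D: "disint_fst M K \<gamma>" and D1: "disint_fst M K1 (distr \<gamma> borel (\<lambda>p. (fst p, Z p)))"
    and Z: "Z \<in> borel_measurable borel"
    and M: "prob_space M" "sets M = sets borel" and \<gamma>: "sets \<gamma> = sets borel"
  shows "AE x in M. K1 x = distr (K x) borel (\<lambda>y. Z (x, y))"
proof -
  obtain G :: "'c set set" where G: "countable G" "Int_stable G" "UNIV \<in> G"
    "sets borel = sigma_sets UNIV G" "G \<subseteq> sets borel"
    by (rule borel_countable_Int_stable_generator)
  have "AE x in M. \<forall>A\<in>G. emeasure (K1 x) A = emeasure (distr (K x) borel (\<lambda>y. Z (x, y))) A"
    using G(1,5) disint_fst_pushforward_emeasure[OF D D1 Z M \<gamma>] by (subst AE_ball_countable) auto
  then show ?thesis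
  proof (rule AE_mp, intro AE_I2 impI)
    fix x assume "x \<in> space M"
      and eq: "\<forall>A\<in>G. emeasure (K1 x) A = emeasure (distr (K x) borel (\<lambda>y. Z (x, y))) A"
    interpret prob_space "K1 x" using disint_fst_kernel(2)[OF D1 \<open>x \<in> space M\<close>] .
    show "K1 x = distr (K x) borel (\<lambda>y. Z (x, y))"
    proof (rule measure_eqI_generator_eq[OF G(2), where \<Omega> = UNIV and A = "\<lambda>_. UNIV"])
      show "sets (K1 x) = sigma_sets UNIV G"
        using disint_fst_kernel(3)[OF D1 \<open>x \<in> space M\<close>] G(4) by simp
    qed (use eq G(3,4) in auto)
  qed
qed

section \<open>Conditional transport costs\<close>

lemma AE_W2sq_disint_fst_gradient:
  fixes M :: "'a::euclidean_space measure" and K K1 :: "'a \<Rightarrow> 'a measure"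
    and Z :: "'a \<times> 'a \<Rightarrow> 'a" and k T :: "'a \<Rightarrow> 'a" and \<phi> :: "'a \<Rightarrow> real"
  assumes D: "disint_fst M K \<gamma>" and D1: "disint_fst M K1 (distr \<gamma> borel (\<lambda>p. (fst p, Z p)))"
    and M: "prob_space M" "sets M = sets borel" and \<gamma>: "sets \<gamma> = sets borel"
    and moment: "integrable \<gamma> (\<lambda>p. norm (snd p) ^ 2)"
    and Z: "\<And>x y. Z (x, y) = k x + T y" and k: "k \<in> borel_measurable borel"
    and T: "continuous_on UNIV T" "linear_growth T"
    and \<phi>: "continuous_on UNIV \<phi>" "quadratic_growth \<phi>"
    and support: "\<And>y y'. \<phi> y + T y \<bullet> (y' - y) \<le> \<phi> y'"
  shows "AE x in M. W2sq (K x) (K1 x) = (\<integral>\<^sup>+y. ennreal (norm (y - Z (x, y)) ^ 2) \<partial>K x)"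
proof -
  have [measurable]: "T \<in> borel_measurable borel"
    using T(1) by (rule borel_measurable_continuous_onI)
  note [measurable] = k
  have Z_eq: "Z = (\<lambda>p. k (fst p) + T (snd p))"
    using Z by (auto simp: fun_eq_iff)
  have [measurable]: "Z \<in> borel_measurable borel"
    unfolding Z_eq by measurable
  have "(\<integral>\<^sup>+x. \<integral>\<^sup>+y. ennreal (norm y ^ 2) \<partial>K x \<partial>M) < \<infinity>"
    using moment disint_fst_nn_integral[OF D M(2) prob_space.not_empty[OF M(1)] \<gamma>,
        of "\<lambda>p. ennreal (norm (snd p) ^ 2)"]
    by (simp add: integrable_iff_bounded)
  moreover have "(\<lambda>x. \<integral>\<^sup>+y. ennreal (norm y ^ 2) \<partial>K x) \<in> borel_measurable M"
    by (rule nn_integral_kernel_measurable[OF M(2) disint_fst_kernel(1)[OF D],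
          where f = "\<lambda>p. ennreal (norm (snd p) ^ 2)", simplified]) measurable
  ultimately have "AE x in M. (\<integral>\<^sup>+y. ennreal (norm y ^ 2) \<partial>K x) \<noteq> \<infinity>"
    by (intro nn_integral_PInf_AE) auto
  moreover have "AE x in M. K1 x = distr (K x) borel (\<lambda>y. Z (x, y))"
    by (rule disint_fst_pushforward[OF D D1 _ M \<gamma>]) measurable
  moreover have "AE x in M. x \<in> space M" by (rule AE_space)
  ultimately show ?thesis
  proof eventually_elim
    case (elim x)
    note K = disint_fst_kernel(2,3)[OF D elim(3)]
    have "integrable (K x) (\<lambda>y. norm y ^ 2)"
      using elim(1) unfolding integrable_iff_bounded
      by (simp add: less_top measurable_cong_sets[OF K(2) refl])
    from W2sq_translated_gradient_map[OF K(1,2) this T \<phi> support, of "k x"]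
    show ?case by (simp add: elim(2) Z)
  qed
qed

text \<open>The constant \<open>c\<close> stays inside the integral on the left because \<open>x \<mapsto> W2sq (K x) (K1 x)\<close>
  is only known to agree almost everywhere with a measurable function.\<close>

lemma nn_integral_W2sq_disint_fst_gradient:
  fixes M :: "'a::euclidean_space measure" and K K1 :: "'a \<Rightarrow> 'a measure"
    and Z :: "'a \<times> 'a \<Rightarrow> 'a" and k T :: "'a \<Rightarrow> 'a" and \<phi> :: "'a \<Rightarrow> real"
  assumes D: "disint_fst M K \<gamma>" and D1: "disint_fst M K1 (distr \<gamma> borel (\<lambda>p. (fst p, Z p)))"
    and M: "prob_space M" "sets M = sets borel" and \<gamma>: "sets \<gamma> = sets borel"
    and moment: "integrable \<gamma> (\<lambda>p. norm (snd p) ^ 2)"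
    and Z: "\<And>x y. Z (x, y) = k x + T y" and k: "k \<in> borel_measurable borel"
    and T: "continuous_on UNIV T" "linear_growth T"
    and \<phi>: "continuous_on UNIV \<phi>" "quadratic_growth \<phi>"
    and support: "\<And>y y'. \<phi> y + T y \<bullet> (y' - y) \<le> \<phi> y'"
  shows "(\<integral>\<^sup>+x. c * W2sq (K x) (K1 x) \<partial>M) = c * (\<integral>\<^sup>+p. ennreal (norm (snd p - Z p) ^ 2) \<partial>\<gamma>)"
proof -
  have [measurable]: "T \<in> borel_measurable borel"
    using T(1) by (rule borel_measurable_continuous_onI)
  note [measurable] = k
  have "Z = (\<lambda>p. k (fst p) + T (snd p))"
    using Z by (auto simp: fun_eq_iff)
  then have [measurable]: "Z \<in> borel_measurable borel"
    by simp
  have "(\<integral>\<^sup>+x. c * W2sq (K x) (K1 x) \<partial>M) = (\<integral>\<^sup>+x. c * \<integral>\<^sup>+y. ennreal (norm (y - Z (x, y)) ^ 2) \<partial>K x \<partial>M)"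
    using AE_W2sq_disint_fst_gradient[OF assms] by (intro nn_integral_cong_AE) auto
  also have "\<dots> = c * (\<integral>\<^sup>+x. \<integral>\<^sup>+y. ennreal (norm (y - Z (x, y)) ^ 2) \<partial>K x \<partial>M)"
    by (rule nn_integral_cmult, rule nn_integral_kernel_measurable[OF M(2) disint_fst_kernel(1)[OF D],
          where f = "\<lambda>p. ennreal (norm (snd p - Z p) ^ 2)", simplified]) measurable
  also have "\<dots> = c * (\<integral>\<^sup>+p. ennreal (norm (snd p - Z p) ^ 2) \<partial>\<gamma>)"
    using disint_fst_nn_integral[OF D M(2) prob_space.not_empty[OF M(1)] \<gamma>,
        of "\<lambda>p. ennreal (norm (snd p - Z p) ^ 2)"] by simp
  finally show ?thesis .
qed

lemma nn_integral_W2sq_disint_fst_grad_lip1: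
  fixes M :: "'a::euclidean_space measure" and u :: "'a \<Rightarrow> real"
  assumes D: "disint_fst M K \<gamma>" and D1: "disint_fst M K1 (distr \<gamma> borel (\<lambda>p. (fst p, Z p)))"
    and M: "prob_space M" "sets M = sets borel" and \<gamma>: "sets \<gamma> = sets borel"
    and moment: "integrable \<gamma> (\<lambda>p. norm (snd p) ^ 2)"
    and u: "grad_lip1 u g" and s: "\<bar>s\<bar> \<le> 1"
    and Z: "\<And>x y. Z (x, y) = k x + (1/2) *\<^sub>R (y + s *\<^sub>R g y)" and k: "k \<in> borel_measurable borel"
  shows "(\<integral>\<^sup>+x. c * W2sq (K x) (K1 x) \<partial>M) = c * (\<integral>\<^sup>+p. ennreal (norm (snd p - Z p) ^ 2) \<partial>\<gamma>)"
proof (rule nn_integral_W2sq_disint_fst_gradient[OF D D1 M \<gamma> moment Z k])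
  note cont = grad_lip1_continuous_on[OF u]
  show "continuous_on UNIV (\<lambda>y. (1/2) *\<^sub>R (y + s *\<^sub>R g y))"
    by (intro continuous_intros cont)
  show "continuous_on UNIV (\<lambda>y. (norm y ^ 2 / 2 + s * u y) / 2)"
    by (intro continuous_intros cont) simp_all
  show "linear_growth (\<lambda>y. (1/2) *\<^sub>R (y + s *\<^sub>R g y))"
    by (intro growth_intros grad_lip1_linear_growth[OF u])
  show "quadratic_growth (\<lambda>y. (norm y ^ 2 / 2 + s * u y) / 2)"
    by (intro growth_intros grad_lip1_quadratic_growth[OF u])
  show "(norm y ^ 2 / 2 + s * u y) / 2 + (1/2) *\<^sub>R (y + s *\<^sub>R g y) \<bullet> (y' - y)
      \<le> (norm y' ^ 2 / 2 + s * u y') / 2" for y y'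
    using grad_lip1_convex_support[OF u s, of y y'] by (simp add: inner_scaleR_left add_divide_distrib)
qed

lemma nn_integral_W2sq_disint_zeta_fst:
  fixes u :: "'a::euclidean_space \<Rightarrow> real"
  assumes \<gamma>: "\<gamma> \<in> couplings \<mu> \<nu>" and moment: "integrable \<nu> (\<lambda>y. norm y ^ 2)"
    and u: "grad_lip1 u g"
    and D: "disint_fst \<mu> K \<gamma>" and D1: "disint_fst \<mu> K1 (distr \<gamma> borel (\<lambda>p. (fst p, zeta g p)))"
  shows "(\<integral>\<^sup>+x. c * W2sq (K x) (K1 x) \<partial>\<mu>) = c * (\<integral>\<^sup>+p. ennreal (norm (snd p - zeta g p) ^ 2) \<partial>\<gamma>)"
proof (rule nn_integral_W2sq_disint_fst_grad_lip1[OF D D1 _ _ _ _ u,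
      where s = "-1" and k = "\<lambda>x. (1/2) *\<^sub>R (x + g x)"])
  show "prob_space \<mu>" "sets \<mu> = sets borel"
    using couplings_marginals[OF \<gamma>] by simp_all
  show "sets \<gamma> = sets borel"
    using couplingsD(2)[OF \<gamma>] .
  show "integrable \<gamma> (\<lambda>p. norm (snd p) ^ 2)"
    using couplings_integral_snd(2)[OF \<gamma>, of "\<lambda>y. norm y ^ 2"] moment by simp
  show "zeta g (x, y) = (1/2) *\<^sub>R (x + g x) + (1/2) *\<^sub>R (y + (-1) *\<^sub>R g y)" for x y
    unfolding zeta_def by (simp add: algebra_simps)
  show "(\<lambda>x. (1/2) *\<^sub>R (x + g x)) \<in> borel_measurable borel"
    using grad_lip1_borel_measurable(2)[OF u] by measurable
qed simp

lemma nn_integral_W2sq_disint_zeta_snd: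
  fixes u :: "'a::euclidean_space \<Rightarrow> real"
  assumes \<gamma>: "\<gamma> \<in> couplings \<mu> \<nu>" and moment: "integrable \<mu> (\<lambda>x. norm x ^ 2)"
    and u: "grad_lip1 u g"
    and D: "disint_snd \<nu> K \<gamma>" and D2: "disint_fst \<nu> K2 (distr \<gamma> borel (\<lambda>p. (snd p, zeta g p)))"
  shows "(\<integral>\<^sup>+y. c * W2sq (K y) (K2 y) \<partial>\<nu>) = c * (\<integral>\<^sup>+p. ennreal (norm (fst p - zeta g p) ^ 2) \<partial>\<gamma>)"
proof -
  note [measurable] = grad_lip1_borel_measurable(2)[OF u]
  define \<gamma>' where "\<gamma>' = distr \<gamma> borel (\<lambda>p. (snd p, fst p))"
  define Z where "Z p = zeta g (snd p, fst p)" for p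
  have swap: "(\<lambda>p. (snd p, fst p)) \<in> \<gamma> \<rightarrow>\<^sub>M borel"
    by (subst measurable_cong_sets[OF couplingsD(2)[OF \<gamma>] refl]) measurable
  have \<gamma>': "\<gamma>' \<in> couplings \<nu> \<mu>"
    unfolding \<gamma>'_def by (rule couplings_swap[OF \<gamma>])
  have D': "disint_fst \<nu> K \<gamma>'"
    unfolding \<gamma>'_def by (rule disint_snd_swap[OF D couplingsD(2)[OF \<gamma>]])
  have "distr \<gamma>' borel (\<lambda>p. (fst p, Z p)) = distr \<gamma> borel (\<lambda>p. (snd p, zeta g p))"
    unfolding \<gamma>'_def Z_def by (subst distr_distr) (auto simp: comp_def intro: swap)
  then have D2': "disint_fst \<nu> K2 (distr \<gamma>' borel (\<lambda>p. (fst p, Z p)))"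
    using D2 by simp
  have "(\<integral>\<^sup>+y. c * W2sq (K y) (K2 y) \<partial>\<nu>) = c * (\<integral>\<^sup>+p. ennreal (norm (snd p - Z p) ^ 2) \<partial>\<gamma>')"
  proof (rule nn_integral_W2sq_disint_fst_grad_lip1[OF D' D2' _ _ _ _ u,
        where s = 1 and k = "\<lambda>x. (1/2) *\<^sub>R (x - g x)"])
    show "prob_space \<nu>" "sets \<nu> = sets borel"
      using couplings_marginals[OF \<gamma>] by simp_all
    show "sets \<gamma>' = sets borel"
      unfolding \<gamma>'_def by simp
    show "integrable \<gamma>' (\<lambda>p. norm (snd p) ^ 2)"
      using couplings_integral_snd(2)[OF \<gamma>', of "\<lambda>x. norm x ^ 2"] moment by simp
    show "Z (x, y) = (1/2) *\<^sub>R (x - g x) + (1/2) *\<^sub>R (y + 1 *\<^sub>R g y)" for x y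
      unfolding Z_def zeta_def by (simp add: algebra_simps)
    show "(\<lambda>x. (1/2) *\<^sub>R (x - g x)) \<in> borel_measurable borel"
      by measurable
  qed simp
  also have "(\<integral>\<^sup>+p. ennreal (norm (snd p - Z p) ^ 2) \<partial>\<gamma>') = (\<integral>\<^sup>+p. ennreal (norm (fst p - zeta g p) ^ 2) \<partial>\<gamma>)"
    unfolding \<gamma>'_def Z_def by (simp add: nn_integral_distr[OF swap])
  finally show ?thesis .
qed

theorem corollary6p4:
  fixes b :: "'a::euclidean_space"
    and \<mu> \<nu> :: "'a measure"
    and u :: "'a \<Rightarrow> real" and g :: "'a \<Rightarrow> 'a"
    and \<gamma> :: "('a \<times> 'a) measure"
    and Kx Ky K1 K2 :: "'a \<Rightarrow> 'a measure"
  assumes "\<mu> \<in> P2b b" and "\<nu> \<in> P2b b"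
    and "optimal_potential \<mu> \<nu> u g"
    and "\<gamma> \<in> Gamma_bar \<mu> \<nu> g"
    and "disint_fst \<mu> Kx \<gamma>"
    and "disint_snd \<nu> Ky \<gamma>"
    and "disint_fst \<mu> K1 (distr \<gamma> borel (\<lambda>p. (fst p, zeta g p)))"
    and "disint_fst \<nu> K2 (distr \<gamma> borel (\<lambda>p. (snd p, zeta g p)))"
  shows "ennreal (Z2 \<mu> \<nu>) =
           (\<integral>\<^sup>+x. ennreal (1/2) * W2sq (Kx x) (K1 x) \<partial>\<mu>) +
           (\<integral>\<^sup>+y. ennreal (1/2) * W2sq (Ky y) (K2 y) \<partial>\<nu>)"
proof -
  have \<gamma>: "\<gamma> \<in> couplings \<mu> \<nu>" using assms(4) unfolding Gamma_bar_def Gamma_def by auto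
  have u: "grad_lip1 u g" using assms(3) unfolding optimal_potential_def by simp
  show ?thesis
    using nn_integral_W2sq_disint_zeta_fst[OF \<gamma> P2bD(3)[OF assms(2)] u assms(5,7)]
      nn_integral_W2sq_disint_zeta_snd[OF \<gamma> P2bD(3)[OF assms(1)] u assms(6,8)]
      ennreal_Z2_eq_zeta_cost[OF assms(1-4)]
    by simp
qed

end
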